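(* Consider the sparse load-balancing queueing model described in the context, and let $(G_n,\mathbf z_n)_{n\in\mathbb N}$ be a sequence of (possibly random) finite graphs with maximal degree at most $d$ together with initial queue states, converging in probability in the local weak sense to a rooted marked graph $(G,\mathbf z)$. Let $\{\pi_1,\dots,\pi_K\}$ be a finite set of policies whose limiting objective values $J^{G,\mathbf z}(\pi_1),\dots,J^{G,\mathbf z}(\pi_K)$ are pairwise distinct, and let $\pi_i$ be the one with maximal limiting objective, $J^{G,\mathbf z}(\pi_i)\ge\max_j J^{G,\mathbf z}(\pi_j)$. Then there exists $n'$ such that for all $n>n'$, $$J^{G_n,\mathbf z_n}(\pi_i)\ge\max_j J^{G_n,\mathbf z_n}(\pi_j).$$
   Context: Queueing model. Fix $d,B\in\mathbb N$, $\alpha>0$, $\Delta t>0$, $\gamma\in(0,1)$. A system is given by an undirected graph $G=(\mathcal N,\mathcal E)$ of maximal degree at most $d$ (every node has at least one neighbour); each node $i$ is an agent owning one FIFO queue with buffer capacity $B$, local state $z_i\in\mathcal Z:=\{0,\dots,B\}$; $N_i$ denotes the neighbours of $i$. Time is divided into decision epochs $t=0,1,\dots$ of length $\Delta t$. A shared per-agent arrival rate $\lambda(t)>0$ evolves as a finite-state Markov chain (e.g. switching between two positive rates $\lambda_h,\lambda_l$), common to all agents. A policy is a sequence $\pi=(\pi_t)_{t\ge0}$ of decision rules $\pi_t:\mathcal Z\to[0,1]$. At the start of epoch $t$ each agent $i$ independently samples $a_i(t)\in\{0,1\}$ with $\mathbb P(a_i(t)=1)=\pi_t(z_i(t))$;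 action $0$ sends all jobs arriving at $i$ during the epoch to its own queue, action $1$ sends each to a uniformly random neighbour's queue. During epoch $t$ queue $i$ evolves for time $\Delta t$ as a continuous-time birth–death chain on $\mathcal Z$ with arrival rate $\lambda(t)\big(1-a_i(t)+\sum_{j\in N_i}a_j(t)/|N_j|\big)$ and service rate $\alpha$; an arrival finding the queue in state $B$ is dropped. $D_i(t)$ is the expected number of drops at queue $i$ during epoch $t$ given the states and actions at its start. Objectives. For finite $(G_n,\mathbf z_n)$: $J^{G_n,\mathbf z_n}(\pi)=-\mathbb E\big[\sum_{t\ge0}\gamma^t\frac1{|G_n|}\sum_{i\in G_n}D_i(t)\big]$. For the limiting rooted marked graph $(G,\varnothing,\mathbf z)$ under the same dynamics: $J^{G,\mathbf z}(\pi)=-\mathbb E\big[\sum_{t\ge0}\gamma^tD_\varnothing(t)\big]$. Local weak convergence. $\mathcal G_*$ is the space of marked rooted graphs $(G,\varnothing,\mathbf z)$; $B_k(\cdot)$ is the marked rooted $k$-hop neighbourhood of the root; $(G_n,\varnothing_n,\mathbf z_n)\to(G,\varnothing,\mathbf z)$ if for every $k$, for all large $n$ there is a mark-preserving rooted isomorphism between the $k$-hop neighbourhoods. $(G_n,\mathbf z_n)$ converges in probability in the local weak sense to $(G,\mathbf z)$ if $\frac1{|G_n|}\sum_{i\in G_n}f(C_i(G_n))\to\mathbb E[f(G,\varnothing,\mathbf z)]$ in probability for every bounded continuous $f:\mathcal G_*\to\mathbb R$, where $C_i(G_n)$ is the connected component of $i$ rooted at $i$ with marks $\mathbf z_n$.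 *)

theory Defs
  imports "HOL-Probability.Probability"
begin

text \<open>Vertices are natural numbers. A marked graph is (V, E, z): vertex set, adjacency
relation, marks (initial queue states). A marked rooted graph additionally carries a root.\<close>

type_synonym mgraph = "nat set \<times> (nat \<Rightarrow> nat \<Rightarrow> bool) \<times> (nat \<Rightarrow> nat)"
type_synonym rgraph = "nat set \<times> (nat \<Rightarrow> nat \<Rightarrow> bool) \<times> (nat \<Rightarrow> nat) \<times> nat"

definition nbrs :: "(nat \<Rightarrow> nat \<Rightarrow> bool) \<Rightarrow> nat \<Rightarrow> nat set" where
  "nbrs E i = {j. E i j}"

definition deg :: "(nat \<Rightarrow> nat \<Rightarrow> bool) \<Rightarrow> nat \<Rightarrow> nat" where
  "deg E i = card (nbrs E i)"

definition wf_lf :: "nat \<Rightarrow> mgraph \<Rightarrow> bool" where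
  "wf_lf B G = (case G of (V, E, z) \<Rightarrow>
     (\<forall>i j. E i j \<longrightarrow> i \<in> V \<and> j \<in> V) \<and> (\<forall>i j. E i j \<longrightarrow> E j i) \<and> (\<forall>i. \<not> E i i) \<and>
     (\<forall>i\<in>V. finite (nbrs E i)) \<and> (\<forall>i\<in>V. z i \<le> B))"

definition sys_graph :: "nat \<Rightarrow> nat \<Rightarrow> mgraph \<Rightarrow> bool" where
  "sys_graph d B G = (case G of (V, E, z) \<Rightarrow>
     wf_lf B (V, E, z) \<and> finite V \<and> V \<noteq> {} \<and> (\<forall>i\<in>V. nbrs E i \<noteq> {} \<and> deg E i \<le> d))"

text \<open>The space G_* of marked rooted (locally finite) graphs, as representatives.\<close>
definition Gstar_set :: "nat \<Rightarrow> rgraph set" where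
  "Gstar_set B = {(V, E, z, r). wf_lf B (V, E, z) \<and> r \<in> V}"

primrec ball :: "(nat \<Rightarrow> nat \<Rightarrow> bool) \<Rightarrow> nat \<Rightarrow> nat \<Rightarrow> nat set" where
  "ball E r 0 = {r}"
| "ball E r (Suc k) = ball E r k \<union> \<Union> (nbrs E ` ball E r k)"

definition ball_iso :: "nat \<Rightarrow> rgraph \<Rightarrow> rgraph \<Rightarrow> bool" where
  "ball_iso k G H = (case G of (V, E, z, r) \<Rightarrow> case H of (V', E', z', r') \<Rightarrow>
     (\<exists>\<phi>. bij_betw \<phi> (ball E r k) (ball E' r' k) \<and> \<phi> r = r' \<and>
        (\<forall>u\<in>ball E r k. \<forall>v\<in>ball E r k. E u v \<longleftrightarrow> E' (\<phi> u) (\<phi> v)) \<and>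
        (\<forall>u\<in>ball E r k. z' (\<phi> u) = z u)))"

definition lw_continuous :: "nat \<Rightarrow> (rgraph \<Rightarrow> real) \<Rightarrow> bool" where
  "lw_continuous B f = (\<forall>G\<in>Gstar_set B. \<forall>\<epsilon>>0. \<exists>k. \<forall>H\<in>Gstar_set B.
      ball_iso k G H \<longrightarrow> \<bar>f H - f G\<bar> < \<epsilon>)"

definition lw_bounded :: "nat \<Rightarrow> (rgraph \<Rightarrow> real) \<Rightarrow> bool" where
  "lw_bounded B f = (\<exists>C. \<forall>G\<in>Gstar_set B. \<bar>f G\<bar> \<le> C)"

text \<open>Borel sigma-algebra of the local topology (generated by the local balls).\<close>
definition Gstar_space :: "nat \<Rightarrow> rgraph measure" where
  "Gstar_space B = sigma (Gstar_set B)
     {{H \<in> Gstar_set B. ball_iso k G H} | k G. G \<in> Gstar_set B}"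

definition component :: "mgraph \<Rightarrow> nat \<Rightarrow> rgraph" where
  "component G i = (case G of (V, E, z) \<Rightarrow>
     (let C = {j. E\<^sup>*\<^sup>* i j} in (C, \<lambda>u v. E u v \<and> u \<in> C \<and> v \<in> C, z, i)))"

definition lw_avg :: "(rgraph \<Rightarrow> real) \<Rightarrow> mgraph \<Rightarrow> real" where
  "lw_avg f G = (case G of (V, E, z) \<Rightarrow> (\<Sum>i\<in>V. f (component G i)) / real (card V))"

definition lwc_prob :: "nat \<Rightarrow> (nat \<Rightarrow> mgraph pmf) \<Rightarrow> rgraph measure \<Rightarrow> bool" where
  "lwc_prob B P M = (\<forall>f. lw_continuous B f \<and> lw_bounded B f \<longrightarrow>
     (\<forall>\<epsilon>>0. (\<lambda>n. measure_pmf.prob (P n) {G. \<bar>lw_avg f G - integral\<^sup>L M f\<bar> > \<epsilon>}) \<longlonglongrightarrow> 0))"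

text \<open>Generator of the birth-death chain on {0..B}: arrival rate mu, service rate alpha;
  arrivals in state B are dropped.\<close>
definition gen :: "real \<Rightarrow> nat \<Rightarrow> real \<Rightarrow> nat \<Rightarrow> nat \<Rightarrow> real" where
  "gen \<alpha> B \<mu> x y =
     (if y = Suc x \<and> x < B then \<mu>
      else if Suc y = x \<and> x \<le> B then \<alpha>
      else if y = x \<and> x \<le> B then - ((if x < B then \<mu> else 0) + (if 0 < x then \<alpha> else 0))
      else 0)"

primrec mpow :: "(nat \<Rightarrow> nat \<Rightarrow> real) \<Rightarrow> nat \<Rightarrow> nat \<Rightarrow> nat \<Rightarrow> nat \<Rightarrow> real" where
  "mpow Q B 0 = (\<lambda>x y. if x = y then 1 else 0)"
| "mpow Q B (Suc k) = (\<lambda>x y. \<Sum>w\<in>{0..B}. mpow Q B k x w * Q w y)"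

text \<open>Transition probabilities over time s: entries of exp(s Q).\<close>
definition trans_prob :: "real \<Rightarrow> nat \<Rightarrow> real \<Rightarrow> real \<Rightarrow> nat \<Rightarrow> nat \<Rightarrow> real" where
  "trans_prob \<alpha> B \<mu> s x y = (\<Sum>k. s ^ k / fact k * mpow (gen \<alpha> B \<mu>) B k x y)"

text \<open>Expected number of dropped arrivals during time dt starting from x (arrivals are
  Poisson of rate mu, dropped when the queue is in state B).\<close>
definition exp_drops :: "real \<Rightarrow> nat \<Rightarrow> real \<Rightarrow> real \<Rightarrow> nat \<Rightarrow> real" where
  "exp_drops \<alpha> B dt \<mu> x = \<mu> * integral {0..dt} (\<lambda>s. trans_prob \<alpha> B \<mu> s x B)"

definition cfgs :: "nat \<Rightarrow> nat set \<Rightarrow> (nat \<Rightarrow> nat) set" where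
  "cfgs B T = PiE T (\<lambda>_. {0..B})"

definition acts :: "nat set \<Rightarrow> (nat \<Rightarrow> nat) set" where
  "acts T = PiE T (\<lambda>_. {0, 1})"

definition act_prob :: "(nat \<Rightarrow> nat \<Rightarrow> real) \<Rightarrow> nat \<Rightarrow> (nat \<Rightarrow> nat) \<Rightarrow> (nat \<Rightarrow> nat) \<Rightarrow> nat set \<Rightarrow> real" where
  "act_prob \<pi> t x a T = (\<Prod>j\<in>T. if a j = 1 then \<pi> t (x j) else 1 - \<pi> t (x j))"

definition inflow :: "real \<Rightarrow> (nat \<Rightarrow> nat \<Rightarrow> bool) \<Rightarrow> (nat \<Rightarrow> nat) \<Rightarrow> nat \<Rightarrow> real" where
  "inflow r E a i = r * ((1 - real (a i)) + (\<Sum>j\<in>nbrs E i. real (a j) / real (deg E j)))"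

text \<open>law ... t S l x: joint probability that lambda(t) is in state l and the queue states
  restricted to S equal x (x in cfgs B S). For finite S this is the exact marginal of the
  system's Markov chain; for S = V (finite graph) it is the full chain.\<close>
fun law :: "nat \<Rightarrow> real \<Rightarrow> real \<Rightarrow> ('l::finite \<Rightarrow> real) \<Rightarrow> ('l \<Rightarrow> 'l \<Rightarrow> real) \<Rightarrow> ('l \<Rightarrow> real)
   \<Rightarrow> (nat \<Rightarrow> nat \<Rightarrow> bool) \<Rightarrow> (nat \<Rightarrow> nat) \<Rightarrow> (nat \<Rightarrow> nat \<Rightarrow> real) \<Rightarrow> nat \<Rightarrow> nat set
   \<Rightarrow> 'l \<Rightarrow> (nat \<Rightarrow> nat) \<Rightarrow> real" where
  "law B \<alpha> dt rate lamP lam0 E z \<pi> 0 S l x = lam0 l * (if x = restrict z S then 1 else 0)"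
| "law B \<alpha> dt rate lamP lam0 E z \<pi> (Suc t) S l' x' =
    (if x' \<in> cfgs B S then
      (let T = S \<union> \<Union> (nbrs E ` S) in
       \<Sum>l\<in>UNIV. \<Sum>x\<in>cfgs B T. law B \<alpha> dt rate lamP lam0 E z \<pi> t T l x * lamP l l' *
         (\<Sum>a\<in>acts T. act_prob \<pi> t x a T *
            (\<Prod>i\<in>S. trans_prob \<alpha> B (inflow (rate l) E a i) dt (x i) (x' i))))
     else 0)"

text \<open>E[D_i(t)], computed from the law of (lambda(t), states on S), where S contains i
  and its neighbours.\<close>
definition drop_at :: "nat \<Rightarrow> real \<Rightarrow> real \<Rightarrow> ('l::finite \<Rightarrow> real) \<Rightarrow> ('l \<Rightarrow> 'l \<Rightarrow> real) \<Rightarrow> ('l \<Rightarrow> real)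
   \<Rightarrow> (nat \<Rightarrow> nat \<Rightarrow> bool) \<Rightarrow> (nat \<Rightarrow> nat) \<Rightarrow> (nat \<Rightarrow> nat \<Rightarrow> real) \<Rightarrow> nat \<Rightarrow> nat set \<Rightarrow> nat \<Rightarrow> real" where
  "drop_at B \<alpha> dt rate lamP lam0 E z \<pi> t S i =
     (\<Sum>l\<in>UNIV. \<Sum>x\<in>cfgs B S. law B \<alpha> dt rate lamP lam0 E z \<pi> t S l x *
        (\<Sum>a\<in>acts S. act_prob \<pi> t x a S * exp_drops \<alpha> B dt (inflow (rate l) E a i) (x i)))"

definition J_graph :: "nat \<Rightarrow> real \<Rightarrow> real \<Rightarrow> real \<Rightarrow> ('l::finite \<Rightarrow> real) \<Rightarrow> ('l \<Rightarrow> 'l \<Rightarrow> real)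
   \<Rightarrow> ('l \<Rightarrow> real) \<Rightarrow> mgraph \<Rightarrow> (nat \<Rightarrow> nat \<Rightarrow> real) \<Rightarrow> real" where
  "J_graph B \<alpha> dt \<gamma> rate lamP lam0 G \<pi> = (case G of (V, E, z) \<Rightarrow>
     - (\<Sum>t. \<gamma> ^ t * ((\<Sum>i\<in>V. drop_at B \<alpha> dt rate lamP lam0 E z \<pi> t V i) / real (card V))))"

definition J_root :: "nat \<Rightarrow> real \<Rightarrow> real \<Rightarrow> real \<Rightarrow> ('l::finite \<Rightarrow> real) \<Rightarrow> ('l \<Rightarrow> 'l \<Rightarrow> real)
   \<Rightarrow> ('l \<Rightarrow> real) \<Rightarrow> rgraph \<Rightarrow> (nat \<Rightarrow> nat \<Rightarrow> real) \<Rightarrow> real" where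
  "J_root B \<alpha> dt \<gamma> rate lamP lam0 G \<pi> = (case G of (V, E, z, r) \<Rightarrow>
     - (\<Sum>t. \<gamma> ^ t * drop_at B \<alpha> dt rate lamP lam0 E z \<pi> t (insert r (nbrs E r)) r))"

definition J_fin :: "nat \<Rightarrow> real \<Rightarrow> real \<Rightarrow> real \<Rightarrow> ('l::finite \<Rightarrow> real) \<Rightarrow> ('l \<Rightarrow> 'l \<Rightarrow> real)
   \<Rightarrow> ('l \<Rightarrow> real) \<Rightarrow> mgraph pmf \<Rightarrow> (nat \<Rightarrow> nat \<Rightarrow> real) \<Rightarrow> real" where
  "J_fin B \<alpha> dt \<gamma> rate lamP lam0 P \<pi> =
     measure_pmf.expectation P (\<lambda>G. J_graph B \<alpha> dt \<gamma> rate lamP lam0 G \<pi>)"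

definition J_lim :: "nat \<Rightarrow> real \<Rightarrow> real \<Rightarrow> real \<Rightarrow> ('l::finite \<Rightarrow> real) \<Rightarrow> ('l \<Rightarrow> 'l \<Rightarrow> real)
   \<Rightarrow> ('l \<Rightarrow> real) \<Rightarrow> rgraph measure \<Rightarrow> (nat \<Rightarrow> nat \<Rightarrow> real) \<Rightarrow> real" where
  "J_lim B \<alpha> dt \<gamma> rate lamP lam0 M \<pi> =
     integral\<^sup>L M (\<lambda>G. J_root B \<alpha> dt \<gamma> rate lamP lam0 G \<pi>)"

end

theory Submission
  imports Defs
begin

text \<open>The expected number of drops at a node during epoch \<open>t\<close> is a function of the law of the
  queue states on the node and its neighbours, and this law is the marginal of a chain that, one
  epoch back, only involves one more layer of neighbours. Hence the drops at the root during
  epoch \<open>t\<close> are determined by the \<open>(t + 2)\<close>-ball, and since all drop rates are bounded, the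
  discounted objective at the root is a bounded continuous function of the rooted graph (once
  truncated below at the bound valid for degree at most \<open>d\<close>, a bound that the limit inherits).
  On a finite graph the objective is the average of this function over the components rooted at
  each node, so local weak convergence in probability makes the finite objectives converge to the
  limiting one, for every policy.
  Finitely many sequences converging to pairwise distinct limits are eventually ordered like the
  limits.\<close>

section \<open>Transition probabilities of the birth-death chain\<close>

lemma sum_gen_row:
  assumes "x \<le> B"
  shows "(\<Sum>y\<in>{0..B}. gen \<alpha> B \<mu> x y) = 0"
proof -
  have "(\<Sum>y\<in>{0..B}. gen \<alpha> B \<mu> x y) =
    (\<Sum>y\<in>{0..B}. (if y = Suc x \<and> x < B then \<mu> else 0)) + (\<Sum>y\<in>{0..B}. (if Suc y = x then \<alpha> else 0))
     - (\<Sum>y\<in>{0..B}. (if y = x then (if x < B then \<mu> else 0) + (if 0 < x then \<alpha> else 0) else 0))"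
    using assms unfolding sum.distrib[symmetric] sum_subtractf[symmetric]
    by (intro sum.cong) (auto simp: gen_def)
  also have "\<dots> = 0"
    using assms by (cases x) (auto simp: sum.delta)
  finally show ?thesis .
qed

lemma abs_gen_le: "\<bar>gen \<alpha> B \<mu> x y\<bar> \<le> \<bar>\<mu>\<bar> + \<bar>\<alpha>\<bar>"
  by (auto simp: gen_def)

lemma abs_gen_shift_le:
  "\<bar>gen \<alpha> B \<mu> x y + c * (if x = y then 1 else 0)\<bar> \<le> \<bar>\<mu>\<bar> + \<bar>\<alpha>\<bar> + \<bar>c\<bar>"
  using abs_gen_le[of \<alpha> B \<mu> x y] by (auto intro: abs_triangle_ineq[THEN order_trans])

lemma sum_mpow_gen_row:
  assumes "x \<le> B"
  shows "(\<Sum>y\<in>{0..B}. mpow (gen \<alpha> B \<mu>) B k x y) = (if k = 0 then 1 else 0)"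
proof (cases k)
  case 0
  then show ?thesis using assms by (simp add: sum.delta)
next
  case (Suc m)
  have "(\<Sum>y\<in>{0..B}. mpow (gen \<alpha> B \<mu>) B k x y)
      = (\<Sum>w\<in>{0..B}. mpow (gen \<alpha> B \<mu>) B m x w * (\<Sum>y\<in>{0..B}. gen \<alpha> B \<mu> w y))"
    unfolding Suc mpow.simps sum_distrib_left by (rule sum.swap)
  also have "\<dots> = 0" by (simp add: sum_gen_row)
  finally show ?thesis using Suc by simp
qed

lemma abs_mpow_le:
  assumes "\<And>x y. \<bar>Q x y\<bar> \<le> M"
  shows "\<bar>mpow Q B k x y\<bar> \<le> (real (Suc B) * M) ^ k"
proof (induction k arbitrary: y)
  case 0
  then show ?case by simp
next
  case (Suc k)
  have "0 \<le> M" using assms[of 0 0] by linarith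
  have "\<bar>mpow Q B (Suc k) x y\<bar> \<le> (\<Sum>w\<in>{0..B}. \<bar>mpow Q B k x w * Q w y\<bar>)"
    by (simp add: sum_abs)
  also have "\<dots> \<le> (\<Sum>w\<in>{0..B}. (real (Suc B) * M) ^ k * M)"
    by (intro sum_mono) (simp add: abs_mult mult_mono Suc assms \<open>0 \<le> M\<close> del: of_nat_Suc)
  also have "\<dots> = (real (Suc B) * M) ^ Suc k" by (simp add: algebra_simps)
  finally show ?case .
qed

lemma summable_exp_mpow:
  assumes "\<And>x y. \<bar>Q x y\<bar> \<le> M"
  shows "summable (\<lambda>k. norm (s ^ k / fact k * mpow Q B k x y))"
proof (rule summable_comparison_test)
  let ?L = "real (Suc B) * M"
  show "summable (\<lambda>k. (\<bar>s\<bar> * ?L) ^ k / fact k)"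
    using summable_exp[of "\<bar>s\<bar> * ?L"] by (simp add: divide_inverse mult.commute)
  have "norm (s ^ k / fact k * mpow Q B k x y) \<le> (\<bar>s\<bar> * ?L) ^ k / fact k" for k
  proof -
    have "norm (s ^ k / fact k * mpow Q B k x y) = \<bar>s\<bar> ^ k / fact k * \<bar>mpow Q B k x y\<bar>"
      by (simp add: abs_mult power_abs)
    also have "\<dots> \<le> \<bar>s\<bar> ^ k / fact k * ?L ^ k"
      by (intro mult_left_mono abs_mpow_le assms) auto
    finally show ?thesis by (simp add: power_mult_distrib)
  qed
  then show "\<exists>N. \<forall>k\<ge>N. norm (norm (s ^ k / fact k * mpow Q B k x y)) \<le> (\<bar>s\<bar> * ?L) ^ k / fact k"
    by auto
qed

lemma mpow_nonneg:
  assumes "\<And>x y. 0 \<le> Q x y"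
  shows "0 \<le> mpow Q B k x y"
  by (induction k arbitrary: y) (auto intro!: sum_nonneg mult_nonneg_nonneg assms)

lemma binomial_convolution_Suc:
  fixes f :: "nat \<Rightarrow> real"
  shows "(\<Sum>i\<le>Suc k. real (Suc k choose i) * a ^ i * f (Suc k - i)) =
     (\<Sum>i\<le>k. real (k choose i) * a ^ i * f (Suc k - i)) + a * (\<Sum>i\<le>k. real (k choose i) * a ^ i * f (k - i))"
proof -
  have shift: "(\<Sum>i\<le>Suc k. real (c i) * a ^ i * f (Suc k - i))
      = real (c 0) * f (Suc k) + (\<Sum>i\<le>k. real (c (Suc i)) * a ^ Suc i * f (k - i))" for c :: "nat \<Rightarrow> nat"
    by (subst sum.atMost_Suc_shift) simp
  have "(\<Sum>i\<le>k. real (k choose i) * a ^ i * f (Suc k - i))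
      = (\<Sum>i\<le>Suc k. real (k choose i) * a ^ i * f (Suc k - i))"
    by simp
  then show ?thesis
    unfolding shift[of "\<lambda>i. Suc k choose i"] shift[of "\<lambda>i. k choose i"]
    by (simp add: sum.distrib sum_distrib_left algebra_simps)
qed

text \<open>Expansion of \<open>Q\<^sup>k = (A - c I)\<^sup>k\<close> with \<open>A = Q + c I\<close>; the two summands commute.\<close>

lemma mpow_binomial:
  assumes "y \<le> B"
  shows "mpow Q B k x y = (\<Sum>i\<le>k. real (k choose i) * (- c) ^ i *
           mpow (\<lambda>x y. Q x y + c * (if x = y then 1 else 0)) B (k - i) x y)"
  using assms
proof (induction k arbitrary: y)
  case 0
  then show ?case by simp
next
  case (Suc k)
  define A where "A = (\<lambda>x y. Q x y + c * (if x = y then 1 else (0::real)))"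
  define f where "f = (\<lambda>j. mpow A B j x y)"
  have "mpow Q B (Suc k) x y = (\<Sum>w\<in>{0..B}. mpow Q B k x w * (A w y - c * (if w = y then 1 else 0)))"
    by (simp add: A_def)
  also have "\<dots> = (\<Sum>w\<in>{0..B}. (\<Sum>i\<le>k. real (k choose i) * (- c) ^ i * mpow A B (k - i) x w)
                                 * (A w y - c * (if w = y then 1 else 0)))"
    by (intro sum.cong refl) (simp add: Suc.IH A_def)
  also have "\<dots> = (\<Sum>i\<le>k. real (k choose i) * (- c) ^ i * (\<Sum>w\<in>{0..B}. mpow A B (k - i) x w * A w y))
       - c * (\<Sum>w\<in>{0..B}. (\<Sum>i\<le>k. real (k choose i) * (- c) ^ i * mpow A B (k - i) x w) * (if w = y then 1 else 0))"
    by (simp add: algebra_simps sum_subtractf sum_distrib_left sum_distrib_right sum.swap[of _ "{..k}" "{0..B}"])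
  also have "(\<Sum>w\<in>{0..B}. (\<Sum>i\<le>k. real (k choose i) * (- c) ^ i * mpow A B (k - i) x w) * (if w = y then 1 else 0))
       = (\<Sum>i\<le>k. real (k choose i) * (- c) ^ i * f (k - i))"
    using Suc.prems by (simp add: f_def sum.delta if_distrib[where f="\<lambda>z. _ * z"] cong: if_cong)
  also have "(\<Sum>i\<le>k. real (k choose i) * (- c) ^ i * (\<Sum>w\<in>{0..B}. mpow A B (k - i) x w * A w y))
       = (\<Sum>i\<le>k. real (k choose i) * (- c) ^ i * f (Suc k - i))"
    by (intro sum.cong refl) (simp add: f_def Suc_diff_le)
  finally have "mpow Q B (Suc k) x y = (\<Sum>i\<le>k. real (k choose i) * (- c) ^ i * f (Suc k - i))
       + (- c) * (\<Sum>i\<le>k. real (k choose i) * (- c) ^ i * f (k - i))"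
    by simp
  also have "\<dots> = (\<Sum>i\<le>Suc k. real (Suc k choose i) * (- c) ^ i * f (Suc k - i))"
    by (rule binomial_convolution_Suc[symmetric])
  finally show ?case by (simp add: f_def A_def)
qed

text \<open>Uniformization: \<open>exp (s Q) = exp (- c s) exp (s (Q + c I))\<close>.\<close>

lemma trans_prob_uniformization:
  assumes "y \<le> B"
  shows "trans_prob \<alpha> B \<mu> s x y = exp (- c * s) *
    (\<Sum>k. s ^ k / fact k * mpow (\<lambda>x y. gen \<alpha> B \<mu> x y + c * (if x = y then 1 else 0)) B k x y)"
proof -
  define A where "A = (\<lambda>x y. gen \<alpha> B \<mu> x y + c * (if x = y then 1 else (0::real)))"
  define a where "a = (\<lambda>i. (- c * s) ^ i / fact i)"
  define b where "b = (\<lambda>j. s ^ j / fact j * mpow A B j x y)"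
  have "summable (\<lambda>k. norm (a k))"
    using summable_exp[of "\<bar>- c * s\<bar>"]
    unfolding a_def by (simp add: divide_inverse mult.commute power_abs abs_mult)
  moreover have "summable (\<lambda>k. norm (b k))"
    unfolding b_def
    by (rule summable_exp_mpow[of _ "\<bar>\<mu>\<bar> + \<bar>\<alpha>\<bar> + \<bar>c\<bar>"])
       (simp add: A_def abs_gen_shift_le)
  ultimately have cauchy: "(\<Sum>k. a k) * (\<Sum>k. b k) = (\<Sum>k. \<Sum>i\<le>k. a i * b (k - i))"
    by (rule Cauchy_product)
  have "s ^ k / fact k * mpow (gen \<alpha> B \<mu>) B k x y = (\<Sum>i\<le>k. a i * b (k - i))" for k
  proof -
    have "s ^ k / fact k * mpow (gen \<alpha> B \<mu>) B k x y
        = (\<Sum>i\<le>k. s ^ k / fact k * (real (k choose i) * (- c) ^ i * mpow A B (k - i) x y))"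
      unfolding A_def by (subst mpow_binomial[OF assms, of _ k x c]) (simp add: sum_distrib_left)
    also have "\<dots> = (\<Sum>i\<le>k. a i * b (k - i))"
    proof (intro sum.cong refl)
      fix i assume "i \<in> {..k}"
      then have "s ^ k = s ^ i * s ^ (k - i)" and "real (k choose i) = fact k / (fact i * fact (k - i))"
        by (simp_all add: power_add[symmetric] binomial_fact)
      then show "s ^ k / fact k * (real (k choose i) * (- c) ^ i * mpow A B (k - i) x y) = a i * b (k - i)"
        unfolding a_def b_def power_mult_distrib by (simp add: field_simps)
    qed
    finally show ?thesis .
  qed
  then have "trans_prob \<alpha> B \<mu> s x y = (\<Sum>k. a k) * (\<Sum>k. b k)"
    unfolding trans_prob_def cauchy by simp
  also have "(\<Sum>k. a k) = exp (- c * s)"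
    unfolding a_def exp_def by (simp add: divide_inverse mult.commute scaleR_conv_of_real)
  finally show ?thesis unfolding b_def A_def .
qed

lemma trans_prob_nonneg:
  assumes "0 \<le> \<mu>" "0 \<le> \<alpha>" "0 \<le> s" "y \<le> B"
  shows "0 \<le> trans_prob \<alpha> B \<mu> s x y"
proof -
  let ?A = "\<lambda>x y. gen \<alpha> B \<mu> x y + (\<mu> + \<alpha>) * (if x = y then 1 else 0)"
  have "0 \<le> ?A x y" for x y
    using assms by (auto simp: gen_def)
  moreover have "summable (\<lambda>k. s ^ k / fact k * mpow ?A B k x y)"
    by (rule summable_norm_cancel, rule summable_exp_mpow[of _ "\<bar>\<mu>\<bar> + \<bar>\<alpha>\<bar> + \<bar>\<mu> + \<alpha>\<bar>"])
       (rule abs_gen_shift_le)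
  ultimately have "0 \<le> (\<Sum>k. s ^ k / fact k * mpow ?A B k x y)"
    using assms by (intro suminf_nonneg mult_nonneg_nonneg mpow_nonneg) auto
  then show ?thesis
    unfolding trans_prob_uniformization[OF assms(4), where c = "\<mu> + \<alpha>"] by simp
qed

lemma sum_trans_prob_row:
  assumes "x \<le> B"
  shows "(\<Sum>y\<in>{0..B}. trans_prob \<alpha> B \<mu> s x y) = 1"
proof -
  have "summable (\<lambda>k. s ^ k / fact k * mpow (gen \<alpha> B \<mu>) B k x y)" for y
    by (rule summable_norm_cancel, rule summable_exp_mpow[of _ "\<bar>\<mu>\<bar> + \<bar>\<alpha>\<bar>"]) (rule abs_gen_le)
  then have "(\<Sum>y\<in>{0..B}. trans_prob \<alpha> B \<mu> s x y)
      = (\<Sum>k. s ^ k / fact k * (\<Sum>y\<in>{0..B}. mpow (gen \<alpha> B \<mu>) B k x y))"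
    unfolding trans_prob_def sum_distrib_left by (rule suminf_sum[symmetric])
  also have "\<dots> = (\<Sum>k. if k = 0 then 1 else 0)"
    by (simp add: sum_mpow_gen_row[OF assms] if_distrib[where f = "\<lambda>z. _ * z"] cong: if_cong)
  also have "\<dots> = 1"
    using sums_single[of 0 "\<lambda>_. 1::real"] by (simp add: sums_iff)
  finally show ?thesis .
qed

lemma trans_prob_le_1:
  assumes "0 \<le> \<mu>" "0 \<le> \<alpha>" "0 \<le> s" "x \<le> B" "y \<le> B"
  shows "trans_prob \<alpha> B \<mu> s x y \<le> 1"
proof -
  have "trans_prob \<alpha> B \<mu> s x y \<le> (\<Sum>y\<in>{0..B}. trans_prob \<alpha> B \<mu> s x y)"
    using assms by (intro member_le_sum trans_prob_nonneg) auto
  then show ?thesis using sum_trans_prob_row[OF assms(4)] by simp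
qed

lemma exp_drops_bounds:
  assumes "0 \<le> \<mu>" "0 \<le> \<alpha>" "0 \<le> dt" "x \<le> B"
  shows "0 \<le> exp_drops \<alpha> B dt \<mu> x" "exp_drops \<alpha> B dt \<mu> x \<le> \<mu> * dt"
proof -
  let ?f = "\<lambda>s. trans_prob \<alpha> B \<mu> s x B"
  have "0 \<le> integral {0..dt} ?f \<and> integral {0..dt} ?f \<le> dt"
  proof (cases "?f integrable_on {0..dt}")
    case True
    have "0 \<le> integral {0..dt} ?f"
      using True assms by (intro integral_nonneg trans_prob_nonneg) auto
    moreover have "integral {0..dt} ?f \<le> integral {0..dt} (\<lambda>s. 1::real)"
      using True assms by (intro integral_le trans_prob_le_1) auto
    ultimately show ?thesis using assms by simp
  next
    case False
    then show ?thesis using assms by (simp add: not_integrable_integral)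
  qed
  then show "0 \<le> exp_drops \<alpha> B dt \<mu> x" "exp_drops \<alpha> B dt \<mu> x \<le> \<mu> * dt"
    unfolding exp_drops_def using assms by (auto intro: mult_left_mono)
qed

section \<open>Marginals of the joint law\<close>

lemma sum_PiE_marginal:
  fixes p :: "nat \<Rightarrow> 'b \<Rightarrow> real" and h :: "(nat \<Rightarrow> 'b) \<Rightarrow> real"
  assumes "finite U" "S \<subseteq> U" "\<And>j. j \<in> U \<Longrightarrow> finite (G j)"
    and "\<And>j. j \<in> U - S \<Longrightarrow> (\<Sum>v\<in>G j. p j v) = 1"
  shows "(\<Sum>x\<in>PiE U G. (\<Prod>j\<in>U - S. p j (x j)) * h (restrict x S)) = (\<Sum>y\<in>PiE S G. h y)"
proof -
  let ?merge = "\<lambda>(y::nat \<Rightarrow> 'b, w::nat \<Rightarrow> 'b). (\<lambda>i. if i \<in> S then y i else w i)"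
  have "(\<Sum>x\<in>PiE U G. (\<Prod>j\<in>U - S. p j (x j)) * h (restrict x S)) =
        (\<Sum>(y, w)\<in>PiE S G \<times> PiE (U - S) G. (\<Prod>j\<in>U - S. p j (w j)) * h y)"
  proof (rule sum.reindex_bij_witness[of _ ?merge "\<lambda>x. (restrict x S, restrict x (U - S))"])
    fix yw assume "yw \<in> PiE S G \<times> PiE (U - S) G"
    then obtain y w where "yw = (y, w)" "y \<in> PiE S G" "w \<in> PiE (U - S) G" by blast
    then show "(restrict (?merge yw) S, restrict (?merge yw) (U - S)) = yw" "?merge yw \<in> PiE U G"
      using assms(2) by (auto simp: PiE_def extensional_def Pi_def fun_eq_iff)
  qed (use assms(2) in \<open>auto simp: PiE_def extensional_def fun_eq_iff\<close>)
  also have "\<dots> = (\<Sum>y\<in>PiE S G. h y * (\<Sum>w\<in>PiE (U - S) G. \<Prod>j\<in>U - S. p j (w j)))"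
    by (simp add: sum.cartesian_product[symmetric] sum_distrib_left mult.commute)
  also have "(\<Sum>w\<in>PiE (U - S) G. \<Prod>j\<in>U - S. p j (w j)) = (\<Prod>j\<in>U - S. \<Sum>v\<in>G j. p j v)"
    using assms by (intro prod_sum_PiE[symmetric]) auto
  also have "\<dots> = 1" using assms by simp
  finally show ?thesis by (simp add: restrict_def)
qed

definition nbhd :: "(nat \<Rightarrow> nat \<Rightarrow> bool) \<Rightarrow> nat set \<Rightarrow> nat set" where
  "nbhd E S = S \<union> \<Union> (nbrs E ` S)"

definition nbr_closed :: "nat \<Rightarrow> (nat \<Rightarrow> nat \<Rightarrow> bool) \<Rightarrow> (nat \<Rightarrow> nat) \<Rightarrow> nat set \<Rightarrow> bool" where
  "nbr_closed B E z W = (\<forall>u\<in>W. finite (nbrs E u) \<and> nbrs E u \<subseteq> W \<and> z u \<le> B)"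

lemma subset_nbhd: "S \<subseteq> nbhd E S"
  by (auto simp: nbhd_def)

lemma nbhd_mono: "S \<subseteq> U \<Longrightarrow> nbhd E S \<subseteq> nbhd E U"
  by (auto simp: nbhd_def)

lemma insert_nbrs_subset_nbhd: "i \<in> S \<Longrightarrow> insert i (nbrs E i) \<subseteq> nbhd E S"
  by (auto simp: nbhd_def)

lemma nbhd_empty [simp]: "nbhd E {} = {}"
  by (simp add: nbhd_def)

lemma nbhd_subset_closed: "nbr_closed B E z W \<Longrightarrow> U \<subseteq> W \<Longrightarrow> nbhd E U \<subseteq> W"
  by (auto simp: nbhd_def nbr_closed_def)

lemma finite_nbhd: "nbr_closed B E z W \<Longrightarrow> U \<subseteq> W \<Longrightarrow> finite U \<Longrightarrow> finite (nbhd E U)"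
  by (auto simp: nbhd_def nbr_closed_def)

lemma finite_cfgs: "finite U \<Longrightarrow> finite (cfgs B U)"
  by (auto simp: cfgs_def intro!: finite_PiE)

lemma cfgs_le: "x \<in> cfgs B U \<Longrightarrow> j \<in> U \<Longrightarrow> x j \<le> B"
  by (auto simp: cfgs_def)

lemma cfgs_empty: "cfgs B {} = {\<lambda>_. undefined}"
  by (simp add: cfgs_def)

lemma acts_le_1: "a \<in> acts T \<Longrightarrow> j \<in> T \<Longrightarrow> a j \<le> 1"
  using PiE_mem[of a T "\<lambda>_. {0, 1}" j] by (auto simp: acts_def)

lemma inflow_cong:
  assumes "\<And>j. j \<in> insert i (nbrs E i) \<Longrightarrow> a j = b j"
  shows "inflow r E a i = inflow r E b i"
  unfolding inflow_def using assms by (auto intro!: sum.cong)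

lemma inflow_nonneg: "0 \<le> r \<Longrightarrow> a i \<le> 1 \<Longrightarrow> 0 \<le> inflow r E a i"
  unfolding inflow_def by (auto intro!: mult_nonneg_nonneg add_nonneg_nonneg sum_nonneg)

lemma inflow_le:
  assumes "0 \<le> r" "\<And>j. j \<in> insert i (nbrs E i) \<Longrightarrow> a j \<le> 1"
  shows "inflow r E a i \<le> r * (1 + real (deg E i))"
proof (cases "finite (nbrs E i)")
  case True
  have "real (a j) / real (deg E j) \<le> 1" if "j \<in> nbrs E i" for j
    using assms(2)[of j] that by (cases "deg E j = 0") auto
  then have "(\<Sum>j\<in>nbrs E i. real (a j) / real (deg E j)) \<le> (\<Sum>j\<in>nbrs E i. 1)"
    by (rule sum_mono)
  then have "(\<Sum>j\<in>nbrs E i. real (a j) / real (deg E j)) \<le> real (deg E i)"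
    by (simp add: deg_def)
  then show ?thesis unfolding inflow_def using assms(1) by (intro mult_left_mono) auto
next
  case False
  then show ?thesis unfolding inflow_def deg_def using assms by (intro mult_left_mono) auto
qed

lemma act_prob_cong:
  assumes "\<And>j. j \<in> T \<Longrightarrow> x j = x' j" "\<And>j. j \<in> T \<Longrightarrow> a j = a' j"
  shows "act_prob \<pi> t x a T = act_prob \<pi> t x' a' T"
  unfolding act_prob_def using assms by (auto intro!: prod.cong)

lemma act_prob_nonneg:
  assumes "\<And>j. j \<in> T \<Longrightarrow> 0 \<le> \<pi> t (x j) \<and> \<pi> t (x j) \<le> 1"
  shows "0 \<le> act_prob \<pi> t x a T"
  unfolding act_prob_def using assms by (auto intro!: prod_nonneg)

lemma act_prob_marginal:
  assumes "S \<subseteq> T" "finite T"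
  shows "(\<Sum>a\<in>acts T. act_prob \<pi> t x a T * h (restrict a S)) = (\<Sum>b\<in>acts S. act_prob \<pi> t x b S * h b)"
proof -
  let ?p = "\<lambda>j v. if v = 1 then \<pi> t (x j) else 1 - \<pi> t (x j)"
  have "act_prob \<pi> t x a T = (\<Prod>j\<in>T - S. ?p j (a j)) * act_prob \<pi> t x (restrict a S) S" for a
    using prod.subset_diff[OF assms] act_prob_cong[of S x x a "restrict a S"]
    unfolding act_prob_def by simp
  then have "(\<Sum>a\<in>acts T. act_prob \<pi> t x a T * h (restrict a S)) =
     (\<Sum>a\<in>acts T. (\<Prod>j\<in>T - S. ?p j (a j)) * (act_prob \<pi> t x (restrict a S) S * h (restrict a S)))"
    by (simp add: mult.assoc)
  also have "\<dots> = (\<Sum>b\<in>acts S. act_prob \<pi> t x b S * h b)"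
    unfolding acts_def by (rule sum_PiE_marginal) (use assms in auto)
  finally show ?thesis .
qed

lemma sum_act_prob: "finite T \<Longrightarrow> (\<Sum>a\<in>acts T. act_prob \<pi> t x a T) = 1"
  using act_prob_marginal[OF empty_subsetI, of T \<pi> t x "\<lambda>_. 1"] by (simp add: act_prob_def acts_def)

lemma trans_prob_marginal:
  assumes "finite U" "S \<subseteq> U" "\<And>j. j \<in> U \<Longrightarrow> x j \<le> B"
  shows "(\<Sum>x'\<in>cfgs B U. (\<Prod>i\<in>U. trans_prob \<alpha> B (m i) dt (x i) (x' i)) * F (restrict x' S))
       = (\<Sum>y\<in>cfgs B S. (\<Prod>i\<in>S. trans_prob \<alpha> B (m i) dt (x i) (y i)) * F y)"
proof -
  let ?p = "\<lambda>i v. trans_prob \<alpha> B (m i) dt (x i) v"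
  have "(\<Prod>i\<in>U. ?p i (x' i)) = (\<Prod>i\<in>U - S. ?p i (x' i)) * (\<Prod>i\<in>S. ?p i (restrict x' S i))" for x'
    using prod.subset_diff[OF assms(2,1)] by simp
  then have "(\<Sum>x'\<in>cfgs B U. (\<Prod>i\<in>U. ?p i (x' i)) * F (restrict x' S))
      = (\<Sum>x'\<in>cfgs B U. (\<Prod>i\<in>U - S. ?p i (x' i)) * ((\<Prod>i\<in>S. ?p i (restrict x' S i)) * F (restrict x' S)))"
    by (simp add: mult.assoc)
  also have "\<dots> = (\<Sum>y\<in>cfgs B S. (\<Prod>i\<in>S. ?p i (y i)) * F y)"
    unfolding cfgs_def by (rule sum_PiE_marginal) (use assms sum_trans_prob_row in auto)
  finally show ?thesis .
qed

declare law.simps(2) [simp del]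

locale queue_model =
  fixes B :: nat and \<alpha> dt :: real and rate :: "'l::finite \<Rightarrow> real"
    and lamP :: "'l \<Rightarrow> 'l \<Rightarrow> real" and lam0 :: "'l \<Rightarrow> real" and \<pi> :: "nat \<Rightarrow> nat \<Rightarrow> real"
begin

abbreviation state_law ::
  "(nat \<Rightarrow> nat \<Rightarrow> bool) \<Rightarrow> (nat \<Rightarrow> nat) \<Rightarrow> nat \<Rightarrow> nat set \<Rightarrow> 'l \<Rightarrow> (nat \<Rightarrow> nat) \<Rightarrow> real" where
  "state_law E z \<equiv> law B \<alpha> dt rate lamP lam0 E z \<pi>"

abbreviation drops :: "(nat \<Rightarrow> nat \<Rightarrow> bool) \<Rightarrow> (nat \<Rightarrow> nat) \<Rightarrow> nat \<Rightarrow> nat set \<Rightarrow> nat \<Rightarrow> real" where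
  "drops E z \<equiv> drop_at B \<alpha> dt rate lamP lam0 E z \<pi>"

definition kernel ::
  "(nat \<Rightarrow> nat \<Rightarrow> bool) \<Rightarrow> nat \<Rightarrow> 'l \<Rightarrow> nat set \<Rightarrow> nat set \<Rightarrow> (nat \<Rightarrow> nat) \<Rightarrow> (nat \<Rightarrow> nat) \<Rightarrow> real" where
  "kernel E t l T S x x' = (\<Sum>a\<in>acts T. act_prob \<pi> t x a T *
     (\<Prod>i\<in>S. trans_prob \<alpha> B (inflow (rate l) E a i) dt (x i) (x' i)))"

definition cond_drops :: "(nat \<Rightarrow> nat \<Rightarrow> bool) \<Rightarrow> nat \<Rightarrow> 'l \<Rightarrow> nat set \<Rightarrow> nat \<Rightarrow> (nat \<Rightarrow> nat) \<Rightarrow> real" where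
  "cond_drops E t l S i x =
     (\<Sum>a\<in>acts S. act_prob \<pi> t x a S * exp_drops \<alpha> B dt (inflow (rate l) E a i) (x i))"

lemma law_Suc:
  "state_law E z (Suc t) S l' x' =
    (if x' \<in> cfgs B S then
       \<Sum>l\<in>UNIV. \<Sum>x\<in>cfgs B (nbhd E S).
         state_law E z t (nbhd E S) l x * lamP l l' * kernel E t l (nbhd E S) S x x'
     else 0)"
  by (simp add: law.simps(2) nbhd_def kernel_def Let_def)

lemma drop_at_eq:
  "drops E z t S i = (\<Sum>l\<in>UNIV. \<Sum>x\<in>cfgs B S. state_law E z t S l x * cond_drops E t l S i x)"
  by (simp add: drop_at_def cond_drops_def)

lemma kernel_restrict:
  "S \<subseteq> T \<Longrightarrow> kernel E t l T S (restrict x T) x' = kernel E t l T S x x'"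
  unfolding kernel_def by (intro sum.cong refl arg_cong2[where f = "(*)"] act_prob_cong prod.cong) auto

lemma kernel_marginal:
  assumes "finite (nbhd E U)" "S \<subseteq> U" "\<And>j. j \<in> U \<Longrightarrow> x j \<le> B"
  shows "(\<Sum>x'\<in>cfgs B U. kernel E t l (nbhd E U) U x x' * F (restrict x' S))
       = (\<Sum>y\<in>cfgs B S. kernel E t l (nbhd E S) S x y * F y)"
proof -
  let ?p = "\<lambda>a i v. trans_prob \<alpha> B (inflow (rate l) E a i) dt (x i) v"
  define \<Psi> where "\<Psi> a = (\<Sum>y\<in>cfgs B S. (\<Prod>i\<in>S. ?p a i (y i)) * F y)" for a
  have "finite U"
    using assms(1) subset_nbhd finite_subset by blast
  then have marg: "(\<Sum>x'\<in>cfgs B U. (\<Prod>i\<in>U. ?p a i (x' i)) * F (restrict x' S)) = \<Psi> a" for a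
    unfolding \<Psi>_def by (rule trans_prob_marginal) (use assms in auto)
  have local: "\<Psi> a = \<Psi> (restrict a (nbhd E S))" for a
  proof -
    have "inflow (rate l) E a i = inflow (rate l) E (restrict a (nbhd E S)) i" if "i \<in> S" for i
      using insert_nbrs_subset_nbhd[OF that, of E] by (intro inflow_cong) auto
    then show ?thesis unfolding \<Psi>_def by (auto intro!: sum.cong prod.cong)
  qed
  have "(\<Sum>x'\<in>cfgs B U. kernel E t l (nbhd E U) U x x' * F (restrict x' S))
      = (\<Sum>a\<in>acts (nbhd E U). act_prob \<pi> t x a (nbhd E U) *
           (\<Sum>x'\<in>cfgs B U. (\<Prod>i\<in>U. ?p a i (x' i)) * F (restrict x' S)))"
    unfolding kernel_def sum_distrib_left sum_distrib_right mult.assoc by (rule sum.swap)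
  also have "\<dots> = (\<Sum>a\<in>acts (nbhd E U). act_prob \<pi> t x a (nbhd E U) * \<Psi> (restrict a (nbhd E S)))"
    unfolding marg local[symmetric] ..
  also have "\<dots> = (\<Sum>b\<in>acts (nbhd E S). act_prob \<pi> t x b (nbhd E S) * \<Psi> b)"
    by (rule act_prob_marginal[OF nbhd_mono[OF assms(2)] assms(1)])
  also have "\<dots> = (\<Sum>y\<in>cfgs B S. kernel E t l (nbhd E S) S x y * F y)"
    unfolding \<Psi>_def kernel_def
    by (simp add: sum_distrib_left sum_distrib_right sum.swap[of _ "cfgs B S"] mult.assoc)
  finally show ?thesis .
qed

lemma law_0_marginal:
  assumes "finite U" "S \<subseteq> U" "\<forall>u\<in>U. z u \<le> B"
  shows "(\<Sum>x\<in>cfgs B U. state_law E z 0 U l x * F (restrict x S))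
       = (\<Sum>y\<in>cfgs B S. state_law E z 0 S l y * F y)"
proof -
  have "restrict z U \<in> cfgs B U" "restrict z S \<in> cfgs B S"
    using assms by (auto simp: cfgs_def)
  moreover have "restrict (restrict z U) S = restrict z S"
    using assms(2) by (auto simp: fun_eq_iff)
  moreover have "finite S"
    using assms(1,2) by (rule finite_subset[rotated])
  ultimately show ?thesis
    using assms(1) by (simp add: if_distrib[where f = "\<lambda>v. _ * v"] if_distrib[where f = "\<lambda>v. v * _"]
        sum.delta' finite_cfgs cong: if_cong)
qed

text \<open>One epoch on \<open>U\<close> only looks at \<open>nbhd E U \<supseteq> nbhd E S\<close>, so the induction hypothesis
  applies to these neighbourhoods.\<close>

lemma law_marginal:
  assumes "nbr_closed B E z W" "finite U" "S \<subseteq> U" "U \<subseteq> W"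
  shows "(\<Sum>x\<in>cfgs B U. state_law E z t U l x * F (restrict x S))
       = (\<Sum>y\<in>cfgs B S. state_law E z t S l y * F y)"
  using assms(2-4)
proof (induction t arbitrary: U S l F)
  case 0
  then show ?case
    using assms(1) by (intro law_0_marginal) (auto simp: nbr_closed_def)
next
  case (Suc t)
  let ?TU = "nbhd E U" and ?TS = "nbhd E S"
  define \<Phi> where "\<Phi> l0 x = (\<Sum>y\<in>cfgs B S. kernel E t l0 ?TS S x y * F y)" for l0 x
  have fin: "finite ?TU"
    using finite_nbhd[OF assms(1) Suc.prems(3,1)] .
  have sub: "?TS \<subseteq> ?TU" "?TU \<subseteq> W"
    using nbhd_mono[OF Suc.prems(2)] nbhd_subset_closed[OF assms(1) Suc.prems(3)] .
  have \<Phi>_restrict: "\<Phi> l0 x = \<Phi> l0 (restrict x ?TS)" for l0 x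
    unfolding \<Phi>_def using kernel_restrict[OF subset_nbhd] by simp
  have "(\<Sum>x'\<in>cfgs B U. state_law E z (Suc t) U l x' * F (restrict x' S))
      = (\<Sum>l0\<in>UNIV. \<Sum>x\<in>cfgs B ?TU. state_law E z t ?TU l0 x * lamP l0 l *
          (\<Sum>x'\<in>cfgs B U. kernel E t l0 ?TU U x x' * F (restrict x' S)))"
    unfolding law_Suc
    by (simp add: sum_distrib_left sum_distrib_right sum.swap[of _ "cfgs B U"] mult.assoc)
  also have "\<dots> = (\<Sum>l0\<in>UNIV. \<Sum>x\<in>cfgs B ?TU. state_law E z t ?TU l0 x * (lamP l0 l * \<Phi> l0 (restrict x ?TS)))"
  proof (intro sum.cong refl)
    fix l0 x assume "x \<in> cfgs B ?TU"
    then have "x j \<le> B" if "j \<in> U" for j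
      using that subset_nbhd[of U E] by (auto intro: cfgs_le)
    then show "state_law E z t ?TU l0 x * lamP l0 l * (\<Sum>x'\<in>cfgs B U. kernel E t l0 ?TU U x x' * F (restrict x' S))
        = state_law E z t ?TU l0 x * (lamP l0 l * \<Phi> l0 (restrict x ?TS))"
      using kernel_marginal[OF fin Suc.prems(2)] by (simp add: \<Phi>_def[symmetric] \<Phi>_restrict[symmetric])
  qed
  also have "\<dots> = (\<Sum>l0\<in>UNIV. \<Sum>y\<in>cfgs B ?TS. state_law E z t ?TS l0 y * (lamP l0 l * \<Phi> l0 y))"
    using fin sub by (intro sum.cong refl Suc.IH) auto
  also have "\<dots> = (\<Sum>x'\<in>cfgs B S. state_law E z (Suc t) S l x' * F x')"
    unfolding law_Suc \<Phi>_def
    by (simp add: sum_distrib_left sum_distrib_right sum.swap[of _ "cfgs B S"] mult.assoc)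
  finally show ?case .
qed

lemma cond_drops_marginal:
  assumes "finite U" "insert i (nbrs E i) \<subseteq> S" "S \<subseteq> U"
  shows "cond_drops E t l U i x = cond_drops E t l S i (restrict x S)"
proof -
  have "cond_drops E t l U i x
      = (\<Sum>a\<in>acts U. act_prob \<pi> t x a U * exp_drops \<alpha> B dt (inflow (rate l) E (restrict a S) i) (x i))"
    unfolding cond_drops_def using assms(2)
    by (intro sum.cong refl arg_cong2[where f = "(*)"] arg_cong2[where f = "exp_drops \<alpha> B dt"] inflow_cong)
       auto
  also have "\<dots> = (\<Sum>b\<in>acts S. act_prob \<pi> t x b S * exp_drops \<alpha> B dt (inflow (rate l) E b i) (x i))"
    using assms by (intro act_prob_marginal) auto
  also have "\<dots> = cond_drops E t l S i (restrict x S)"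
    unfolding cond_drops_def using assms(2)
    by (intro sum.cong refl arg_cong2[where f = "(*)"] act_prob_cong) auto
  finally show ?thesis .
qed

lemma drop_at_marginal:
  assumes "nbr_closed B E z W" "finite U" "U \<subseteq> W" "insert i (nbrs E i) \<subseteq> S" "S \<subseteq> U"
  shows "drops E z t U i = drops E z t S i"
  unfolding drop_at_eq using assms
  by (simp add: cond_drops_marginal law_marginal)

end

section \<open>Invariance under local isomorphisms\<close>

text \<open>\<open>nbhd_iso E E' \<phi> D t S\<close> records exactly the data that the law of the states on \<open>S\<close>
  after \<open>t\<close> epochs depends on, layer by layer.\<close>

primrec nbhd_iso ::
  "(nat \<Rightarrow> nat \<Rightarrow> bool) \<Rightarrow> (nat \<Rightarrow> nat \<Rightarrow> bool) \<Rightarrow> (nat \<Rightarrow> nat) \<Rightarrow> nat set \<Rightarrow> nat \<Rightarrow> nat set \<Rightarrow> bool" where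
  "nbhd_iso E E' \<phi> D 0 S = (S \<subseteq> D)"
| "nbhd_iso E E' \<phi> D (Suc t) S = (S \<subseteq> D \<and>
     (\<forall>u\<in>S. \<phi> ` nbrs E u = nbrs E' (\<phi> u) \<and> (\<forall>w\<in>nbrs E u. deg E w = deg E' (\<phi> w))) \<and>
     nbhd_iso E E' \<phi> D t (nbhd E S))"

lemma nbhd_iso_subset: "nbhd_iso E E' \<phi> D t S \<Longrightarrow> S \<subseteq> D"
  by (cases t) auto

definition transport :: "nat set \<Rightarrow> (nat \<Rightarrow> nat) \<Rightarrow> nat set \<Rightarrow> (nat \<Rightarrow> nat) \<Rightarrow> nat \<Rightarrow> nat" where
  "transport D \<phi> S x = restrict (\<lambda>v. x (inv_into D \<phi> v)) (\<phi> ` S)"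

lemma transport_apply: "inj_on \<phi> D \<Longrightarrow> S \<subseteq> D \<Longrightarrow> u \<in> S \<Longrightarrow> transport D \<phi> S x (\<phi> u) = x u"
  unfolding transport_def by (auto simp: inv_into_f_f subset_iff)

lemma inj_on_transport:
  assumes "inj_on \<phi> D" "S \<subseteq> D"
  shows "inj_on (transport D \<phi> S) (extensional S)"
proof (rule inj_onI)
  fix x y assume x: "x \<in> extensional S" and y: "y \<in> extensional S"
    and eq: "transport D \<phi> S x = transport D \<phi> S y"
  show "x = y"
  proof (rule extensionalityI[OF x y])
    fix u assume "u \<in> S"
    then show "x u = y u"
      using transport_apply[OF assms, of u x] transport_apply[OF assms, of u y] eq by simp
  qed
qed

lemma bij_betw_transport:
  assumes "inj_on \<phi> D" "S \<subseteq> D"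
  shows "bij_betw (transport D \<phi> S) (PiE S (\<lambda>_. A)) (PiE (\<phi> ` S) (\<lambda>_. A))"
proof (rule bij_betw_byWitness[where f' = "\<lambda>y. restrict (\<lambda>u. y (\<phi> u)) S"])
  show "\<forall>x\<in>PiE S (\<lambda>_. A). restrict (\<lambda>u. transport D \<phi> S x (\<phi> u)) S = x"
    using assms by (auto simp: transport_apply PiE_def extensional_def fun_eq_iff)
  show "\<forall>y\<in>PiE (\<phi> ` S) (\<lambda>_. A). transport D \<phi> S (restrict (\<lambda>u. y (\<phi> u)) S) = y"
    using assms
    by (auto simp: transport_def PiE_def extensional_def fun_eq_iff inv_into_f_f subset_iff f_inv_into_f)
  show "transport D \<phi> S ` PiE S (\<lambda>_. A) \<subseteq> PiE (\<phi> ` S) (\<lambda>_. A)"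
    using assms by (auto simp: transport_def PiE_def extensional_def Pi_def inv_into_f_f subset_iff)
qed (auto simp: PiE_def Pi_def)

lemma bij_betw_transport_cfgs:
  "inj_on \<phi> D \<Longrightarrow> S \<subseteq> D \<Longrightarrow> bij_betw (transport D \<phi> S) (cfgs B S) (cfgs B (\<phi> ` S))"
  unfolding cfgs_def by (rule bij_betw_transport)

lemma bij_betw_transport_acts:
  "inj_on \<phi> D \<Longrightarrow> S \<subseteq> D \<Longrightarrow> bij_betw (transport D \<phi> S) (acts S) (acts (\<phi> ` S))"
  unfolding acts_def by (rule bij_betw_transport)

lemma image_nbhd:
  assumes "\<forall>u\<in>S. \<phi> ` nbrs E u = nbrs E' (\<phi> u)"
  shows "\<phi> ` nbhd E S = nbhd E' (\<phi> ` S)"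
proof -
  have "nbhd E' (\<phi> ` S) = \<phi> ` S \<union> (\<Union>u\<in>S. nbrs E' (\<phi> u))"
    by (auto simp: nbhd_def)
  also have "\<dots> = \<phi> ` S \<union> (\<Union>u\<in>S. \<phi> ` nbrs E u)"
    using assms by simp
  also have "\<dots> = \<phi> ` nbhd E S"
    by (simp add: nbhd_def image_Un image_UN)
  finally show ?thesis by simp
qed

lemma act_prob_transport:
  assumes "inj_on \<phi> D" "T \<subseteq> D"
  shows "act_prob \<pi> t (transport D \<phi> T x) (transport D \<phi> T a) (\<phi> ` T) = act_prob \<pi> t x a T"
proof -
  have "inj_on \<phi> T" using assms inj_on_subset by blast
  then show ?thesis
    unfolding act_prob_def
    by (simp add: prod.reindex) (intro prod.cong refl, use assms in \<open>auto simp: transport_apply\<close>)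
qed

lemma inflow_transport:
  assumes inj: "inj_on \<phi> D" and T: "T \<subseteq> D" "insert i (nbrs E i) \<subseteq> T"
    and nbrs: "\<phi> ` nbrs E i = nbrs E' (\<phi> i)" and deg: "\<forall>w\<in>nbrs E i. deg E w = deg E' (\<phi> w)"
  shows "inflow r E' (transport D \<phi> T a) (\<phi> i) = inflow r E a i"
proof -
  have "inj_on \<phi> (nbrs E i)" using inj T inj_on_subset by blast
  then have "(\<Sum>j\<in>nbrs E' (\<phi> i). real (transport D \<phi> T a j) / real (deg E' j))
      = (\<Sum>j\<in>nbrs E i. real (transport D \<phi> T a (\<phi> j)) / real (deg E' (\<phi> j)))"
    unfolding nbrs[symmetric] by (rule sum.reindex[unfolded comp_def])
  also have "\<dots> = (\<Sum>j\<in>nbrs E i. real (a j) / real (deg E j))"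
    using T deg by (intro sum.cong refl) (auto simp: transport_apply[OF inj T(1)])
  finally show ?thesis
    unfolding inflow_def using T by (simp add: transport_apply[OF inj T(1)])
qed

context queue_model
begin

lemma kernel_transport:
  assumes inj: "inj_on \<phi> D" and "nbhd E S \<subseteq> D"
    and nbrs: "\<forall>u\<in>S. \<phi> ` nbrs E u = nbrs E' (\<phi> u) \<and> (\<forall>w\<in>nbrs E u. deg E w = deg E' (\<phi> w))"
  shows "kernel E' t l (\<phi> ` nbhd E S) (\<phi> ` S) (transport D \<phi> (nbhd E S) y) (transport D \<phi> S x)
       = kernel E t l (nbhd E S) S y x"
proof -
  let ?T = "nbhd E S"
  have SD: "S \<subseteq> D" using assms(2) subset_nbhd by blast
  have "inj_on \<phi> S" using inj SD inj_on_subset by blast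
  have prod: "(\<Prod>i'\<in>\<phi> ` S. trans_prob \<alpha> B (inflow (rate l) E' (transport D \<phi> ?T a) i') dt
          (transport D \<phi> ?T y i') (transport D \<phi> S x i'))
      = (\<Prod>i\<in>S. trans_prob \<alpha> B (inflow (rate l) E a i) dt (y i) (x i))" for a
  proof -
    have "(\<Prod>i'\<in>\<phi> ` S. trans_prob \<alpha> B (inflow (rate l) E' (transport D \<phi> ?T a) i') dt
          (transport D \<phi> ?T y i') (transport D \<phi> S x i'))
        = (\<Prod>i\<in>S. trans_prob \<alpha> B (inflow (rate l) E' (transport D \<phi> ?T a) (\<phi> i)) dt
          (transport D \<phi> ?T y (\<phi> i)) (transport D \<phi> S x (\<phi> i)))"
      using \<open>inj_on \<phi> S\<close> by (rule prod.reindex[unfolded comp_def])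
    also have "\<dots> = (\<Prod>i\<in>S. trans_prob \<alpha> B (inflow (rate l) E a i) dt (y i) (x i))"
    proof (rule prod.cong[OF refl])
      fix i assume i: "i \<in> S"
      have iT: "insert i (nbrs E i) \<subseteq> ?T" by (rule insert_nbrs_subset_nbhd[OF i])
      have "inflow (rate l) E' (transport D \<phi> ?T a) (\<phi> i) = inflow (rate l) E a i"
        using nbrs i by (intro inflow_transport[OF inj assms(2) iT]) auto
      moreover have "transport D \<phi> ?T y (\<phi> i) = y i"
        using iT by (intro transport_apply[OF inj assms(2)]) auto
      ultimately show "trans_prob \<alpha> B (inflow (rate l) E' (transport D \<phi> ?T a) (\<phi> i)) dt
          (transport D \<phi> ?T y (\<phi> i)) (transport D \<phi> S x (\<phi> i))
        = trans_prob \<alpha> B (inflow (rate l) E a i) dt (y i) (x i)"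
        using transport_apply[OF inj SD i] by simp
    qed
    finally show ?thesis .
  qed
  show ?thesis
    unfolding kernel_def
    by (subst sum.reindex_bij_betw[OF bij_betw_transport_acts[OF inj assms(2)], symmetric])
       (simp add: act_prob_transport[OF inj assms(2)] prod)
qed

lemma law_transport:
  assumes inj: "inj_on \<phi> D" and marks: "\<forall>u\<in>D. z' (\<phi> u) = z u"
  shows "nbhd_iso E E' \<phi> D t S \<Longrightarrow> x \<in> cfgs B S \<Longrightarrow>
    state_law E' z' t (\<phi> ` S) l (transport D \<phi> S x) = state_law E z t S l x"
proof (induction t arbitrary: S l x)
  case 0
  then have SD: "S \<subseteq> D" by simp
  have "transport D \<phi> S (restrict z S) = restrict z' (\<phi> ` S)"
    using SD marks inj by (auto simp: transport_def fun_eq_iff inv_into_f_f subset_iff)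
  moreover have "x = restrict z S \<longleftrightarrow> transport D \<phi> S x = transport D \<phi> S (restrict z S)"
    using inj_on_transport[OF inj SD] 0(2) by (auto simp: cfgs_def PiE_def inj_on_eq_iff)
  ultimately show ?case by simp
next
  case (Suc t)
  let ?T = "nbhd E S"
  have SD: "S \<subseteq> D" and iso: "nbhd_iso E E' \<phi> D t ?T"
    and nbrs: "\<forall>u\<in>S. \<phi> ` nbrs E u = nbrs E' (\<phi> u) \<and> (\<forall>w\<in>nbrs E u. deg E w = deg E' (\<phi> w))"
    using Suc.prems by auto
  have TD: "?T \<subseteq> D" using nbhd_iso_subset[OF iso] .
  have "transport D \<phi> S x \<in> cfgs B (\<phi> ` S)"
    using bij_betw_transport_cfgs[OF inj SD] Suc.prems(2) by (auto simp: bij_betw_def)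
  moreover have "\<phi> ` ?T = nbhd E' (\<phi> ` S)"
    using nbrs by (intro image_nbhd) auto
  ultimately have "state_law E' z' (Suc t) (\<phi> ` S) l (transport D \<phi> S x)
      = (\<Sum>l0\<in>UNIV. \<Sum>y\<in>cfgs B (\<phi> ` ?T). state_law E' z' t (\<phi> ` ?T) l0 y * lamP l0 l *
           kernel E' t l0 (\<phi> ` ?T) (\<phi> ` S) y (transport D \<phi> S x))"
    unfolding law_Suc by simp
  also have "\<dots> = (\<Sum>l0\<in>UNIV. \<Sum>y\<in>cfgs B ?T. state_law E' z' t (\<phi> ` ?T) l0 (transport D \<phi> ?T y) * lamP l0 l *
           kernel E' t l0 (\<phi> ` ?T) (\<phi> ` S) (transport D \<phi> ?T y) (transport D \<phi> S x))"
    by (intro sum.cong refl sum.reindex_bij_betw[OF bij_betw_transport_cfgs[OF inj TD], symmetric])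
  also have "\<dots> = (\<Sum>l0\<in>UNIV. \<Sum>y\<in>cfgs B ?T. state_law E z t ?T l0 y * lamP l0 l * kernel E t l0 ?T S y x)"
    by (intro sum.cong refl) (simp add: Suc.IH[OF iso] kernel_transport[OF inj TD nbrs])
  also have "\<dots> = state_law E z (Suc t) S l x"
    unfolding law_Suc using Suc.prems(2) by simp
  finally show ?case .
qed

lemma drop_at_transport:
  assumes inj: "inj_on \<phi> D" and marks: "\<forall>u\<in>D. z' (\<phi> u) = z u"
    and iso: "nbhd_iso E E' \<phi> D t S" and iS: "insert i (nbrs E i) \<subseteq> S"
    and "\<phi> ` nbrs E i = nbrs E' (\<phi> i)" "\<forall>w\<in>nbrs E i. deg E w = deg E' (\<phi> w)"
  shows "drops E' z' t (\<phi> ` S) (\<phi> i) = drops E z t S i"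
proof -
  have SD: "S \<subseteq> D" using nbhd_iso_subset[OF iso] .
  have "i \<in> S" using iS by simp
  have "cond_drops E' t l (\<phi> ` S) (\<phi> i) (transport D \<phi> S x) = cond_drops E t l S i x" for l x
  proof -
    have "inflow (rate l) E' (transport D \<phi> S a) (\<phi> i) = inflow (rate l) E a i" for a
      by (rule inflow_transport[OF inj SD iS assms(5,6)])
    then show ?thesis
      unfolding cond_drops_def
      by (subst sum.reindex_bij_betw[OF bij_betw_transport_acts[OF inj SD], symmetric])
         (simp add: act_prob_transport[OF inj SD] transport_apply[OF inj SD \<open>i \<in> S\<close>])
  qed
  then show ?thesis
    unfolding drop_at_eq
    by (subst sum.reindex_bij_betw[OF bij_betw_transport_cfgs[OF inj SD], symmetric])
       (simp add: law_transport[OF inj marks iso])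
qed

end

section \<open>Quantities determined by a ball around the root\<close>

lemma ball_mono: "j \<le> k \<Longrightarrow> ball E r j \<subseteq> ball E r k"
  by (induction k) (auto simp: le_Suc_eq)

lemma root_in_ball: "r \<in> ball E r k"
  using ball_mono[of 0 k E r] by auto

lemma ball_1: "ball E r 1 = insert r (nbrs E r)"
  by auto

lemma nbrs_subset_ball_Suc: "u \<in> ball E r j \<Longrightarrow> nbrs E u \<subseteq> ball E r (Suc j)"
  by auto

lemma deg_eq_if_image_nbrs:
  "inj_on \<phi> (nbrs E u) \<Longrightarrow> \<phi> ` nbrs E u = nbrs E' (\<phi> u) \<Longrightarrow> deg E' (\<phi> u) = deg E u"
  unfolding deg_def by (metis card_image)

lemma image_nbrs_eq:
  assumes edges: "\<forall>u\<in>ball E r k. \<forall>v\<in>ball E r k. E u v \<longleftrightarrow> E' (\<phi> u) (\<phi> v)"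
    and onto: "nbrs E' (\<phi> u) \<subseteq> \<phi> ` ball E r k"
    and u: "u \<in> ball E r j" and "j < k"
  shows "\<phi> ` nbrs E u = nbrs E' (\<phi> u)"
proof -
  have uk: "u \<in> ball E r k" and nk: "nbrs E u \<subseteq> ball E r k"
    using ball_mono[of j k E r] ball_mono[of "Suc j" k E r] nbrs_subset_ball_Suc[OF u] \<open>j < k\<close> u
    by auto
  show ?thesis
  proof
    show "\<phi> ` nbrs E u \<subseteq> nbrs E' (\<phi> u)"
      using edges uk nk by (auto simp: nbrs_def)
    show "nbrs E' (\<phi> u) \<subseteq> \<phi> ` nbrs E u"
    proof
      fix w assume w: "w \<in> nbrs E' (\<phi> u)"
      then obtain v where "v \<in> ball E r k" "w = \<phi> v" using onto by blast
      then show "w \<in> \<phi> ` nbrs E u" using edges uk w by (auto simp: nbrs_def)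
    qed
  qed
qed

lemma image_ball:
  assumes edges: "\<forall>u\<in>ball E r k. \<forall>v\<in>ball E r k. E u v \<longleftrightarrow> E' (\<phi> u) (\<phi> v)"
    and onto: "\<forall>j<k. \<forall>u'\<in>ball E' (\<phi> r) j. nbrs E' u' \<subseteq> \<phi> ` ball E r k"
  shows "j \<le> k \<Longrightarrow> \<phi> ` ball E r j = ball E' (\<phi> r) j"
proof (induction j)
  case 0
  then show ?case by simp
next
  case (Suc j)
  then have IH: "\<phi> ` ball E r j = ball E' (\<phi> r) j" by simp
  have nbrs_eq: "\<phi> ` nbrs E u = nbrs E' (\<phi> u)" if "u \<in> ball E r j" for u
  proof (rule image_nbrs_eq[where E = E and E' = E' and r = r and k = k, OF edges _ that])
    have "\<phi> u \<in> ball E' (\<phi> r) j" using IH that by blast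
    moreover have "j < k" using Suc.prems by simp
    ultimately show "nbrs E' (\<phi> u) \<subseteq> \<phi> ` ball E r k" using onto by blast
  qed (use Suc.prems in simp)
  have "\<phi> ` ball E r (Suc j) = \<phi> ` ball E r j \<union> (\<Union>u\<in>ball E r j. \<phi> ` nbrs E u)"
    by auto
  also have "\<dots> = \<phi> ` ball E r j \<union> (\<Union>u\<in>ball E r j. nbrs E' (\<phi> u))"
    using nbrs_eq by simp
  also have "\<dots> = ball E' (\<phi> r) (Suc j)"
    unfolding ball.simps(2) IH[symmetric] image_image by simp
  finally show ?case .
qed

lemma ball_iso_obtain:
  assumes "ball_iso k (V, E, z, r) (V', E', z', r')"
  obtains \<phi> where "bij_betw \<phi> (ball E r k) (ball E' r' k)" "\<phi> r = r'"
    "\<forall>u\<in>ball E r k. z' (\<phi> u) = z u"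
    "\<And>j u. j < k \<Longrightarrow> u \<in> ball E r j \<Longrightarrow> \<phi> ` nbrs E u = nbrs E' (\<phi> u)"
proof -
  obtain \<phi> where bij: "bij_betw \<phi> (ball E r k) (ball E' r' k)" and r: "\<phi> r = r'"
    and edges: "\<forall>u\<in>ball E r k. \<forall>v\<in>ball E r k. E u v \<longleftrightarrow> E' (\<phi> u) (\<phi> v)"
    and "\<forall>u\<in>ball E r k. z' (\<phi> u) = z u"
    using assms unfolding ball_iso_def by auto
  moreover have "\<phi> ` nbrs E u = nbrs E' (\<phi> u)" if "j < k" "u \<in> ball E r j" for j u
  proof (rule image_nbrs_eq[where E = E and E' = E' and r = r and k = k, OF edges _ that(2,1)])
    have nbrs_in_ball: "nbrs E' u' \<subseteq> ball E' r' k" if "j' < k" "u' \<in> ball E' r' j'" for j' u'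
      using nbrs_subset_ball_Suc[OF that(2)] ball_mono[of "Suc j'" k E' r'] that(1) by auto
    then have "\<phi> ` ball E r j = ball E' r' j"
      using image_ball[where E = E and E' = E' and r = r and k = k, OF edges, of j] that bij r
      by (auto simp: bij_betw_def)
    then have "nbrs E' (\<phi> u) \<subseteq> ball E' r' k"
      using nbrs_in_ball that by blast
    then show "nbrs E' (\<phi> u) \<subseteq> \<phi> ` ball E r k"
      using bij by (simp add: bij_betw_def)
  qed
  ultimately show ?thesis using that by blast
qed

lemma ball_iso_sym:
  assumes "ball_iso k (V, E, z, r) (V', E', z', r')"
  shows "ball_iso k (V', E', z', r') (V, E, z, r)"
proof -
  obtain \<phi> where bij: "bij_betw \<phi> (ball E r k) (ball E' r' k)" and r: "\<phi> r = r'"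
    and edges: "\<forall>u\<in>ball E r k. \<forall>v\<in>ball E r k. E u v \<longleftrightarrow> E' (\<phi> u) (\<phi> v)"
    and marks: "\<forall>u\<in>ball E r k. z' (\<phi> u) = z u"
    using assms unfolding ball_iso_def by auto
  define \<psi> where "\<psi> = inv_into (ball E r k) \<phi>"
  have bij': "bij_betw \<psi> (ball E' r' k) (ball E r k)"
    unfolding \<psi>_def by (rule bij_betw_inv_into[OF bij])
  have "\<psi> r' = r"
    unfolding \<psi>_def r[symmetric] using bij root_in_ball by (metis bij_betw_inv_into_left)
  moreover have inv: "\<phi> (\<psi> u') = u'" "\<psi> u' \<in> ball E r k" if "u' \<in> ball E' r' k" for u'
    using bij bij' that unfolding \<psi>_def by (auto simp: bij_betw_def f_inv_into_f)
  moreover have "\<forall>u\<in>ball E' r' k. \<forall>v\<in>ball E' r' k. E' u v \<longleftrightarrow> E (\<psi> u) (\<psi> v)"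
    using edges inv by metis
  moreover have "\<forall>u\<in>ball E' r' k. z (\<psi> u) = z' u"
    using marks inv by metis
  ultimately show ?thesis
    unfolding ball_iso_def prod.case using bij' by blast
qed

lemma nbhd_iso_ball:
  assumes inj: "inj_on \<phi> (ball E r k)"
    and nbrs: "\<And>j u. j < k \<Longrightarrow> u \<in> ball E r j \<Longrightarrow> \<phi> ` nbrs E u = nbrs E' (\<phi> u)"
  shows "S \<subseteq> ball E r j \<Longrightarrow> j + t + 1 \<le> k \<Longrightarrow> nbhd_iso E E' \<phi> (ball E r k) t S"
proof (induction t arbitrary: S j)
  case 0
  then show ?case using ball_mono[of j k E r] by auto
next
  case (Suc t)
  have "deg E' (\<phi> w) = deg E w" if "u \<in> S" "w \<in> nbrs E u" for u w
  proof (rule deg_eq_if_image_nbrs)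
    have w: "w \<in> ball E r (Suc j)" using that Suc.prems by auto
    then show "\<phi> ` nbrs E w = nbrs E' (\<phi> w)" using nbrs[of "Suc j" w] Suc.prems by simp
    have "Suc (Suc j) \<le> k" using Suc.prems by simp
    then have "nbrs E w \<subseteq> ball E r k"
      by (rule subset_trans[OF nbrs_subset_ball_Suc[OF w] ball_mono])
    then show "inj_on \<phi> (nbrs E w)" using inj inj_on_subset by blast
  qed
  moreover have "\<phi> ` nbrs E u = nbrs E' (\<phi> u)" if "u \<in> S" for u
    using that Suc.prems by (intro nbrs[of j]) auto
  moreover have "nbhd_iso E E' \<phi> (ball E r k) t (nbhd E S)"
    using Suc.prems by (intro Suc.IH[of _ "Suc j"]) (auto simp: nbhd_def)
  ultimately show ?case
    using Suc.prems ball_mono[of j k E r] by auto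
qed

definition root_deg :: "rgraph \<Rightarrow> nat" where
  "root_deg G = (case G of (V, E, z, r) \<Rightarrow> deg E r)"

lemma root_deg_ball_iso:
  assumes "ball_iso k G H" "1 \<le> k"
  shows "root_deg H = root_deg G"
proof -
  obtain V E z r V' E' z' r' where G: "G = (V, E, z, r)" and H: "H = (V', E', z', r')"
    by (cases G, cases H) auto
  obtain \<phi> where bij: "bij_betw \<phi> (ball E r k) (ball E' r' k)" and r: "\<phi> r = r'"
    and nbrs: "\<And>j u. j < k \<Longrightarrow> u \<in> ball E r j \<Longrightarrow> \<phi> ` nbrs E u = nbrs E' (\<phi> u)"
    using ball_iso_obtain assms(1) unfolding G H by metis
  have "nbrs E r \<subseteq> ball E r k" using ball_mono[of 1 k E r] assms(2) by auto
  then have "inj_on \<phi> (nbrs E r)" using bij bij_betw_imp_inj_on inj_on_subset by blast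
  then show ?thesis
    unfolding G H root_deg_def using deg_eq_if_image_nbrs nbrs[of 0 r] assms(2) r by auto
qed

context queue_model
begin

definition root_drops :: "nat \<Rightarrow> rgraph \<Rightarrow> real" where
  "root_drops t G = (case G of (V, E, z, r) \<Rightarrow> drops E z t (insert r (nbrs E r)) r)"

lemma root_drops_ball_iso:
  assumes "ball_iso k G H" "t + 2 \<le> k"
  shows "root_drops t H = root_drops t G"
proof -
  obtain V E z r V' E' z' r' where G: "G = (V, E, z, r)" and H: "H = (V', E', z', r')"
    by (cases G, cases H) auto
  obtain \<phi> where bij: "bij_betw \<phi> (ball E r k) (ball E' r' k)" and r: "\<phi> r = r'"
    and marks: "\<forall>u\<in>ball E r k. z' (\<phi> u) = z u"
    and nbrs: "\<And>j u. j < k \<Longrightarrow> u \<in> ball E r j \<Longrightarrow> \<phi> ` nbrs E u = nbrs E' (\<phi> u)"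
    using ball_iso_obtain assms(1) unfolding G H by metis
  have inj: "inj_on \<phi> (ball E r k)" using bij by (rule bij_betw_imp_inj_on)
  have iso: "nbhd_iso E E' \<phi> (ball E r k) (Suc t) (ball E r 0)"
    by (rule nbhd_iso_ball[OF inj nbrs, where j = 0]) (use assms(2) in auto)
  then have "nbhd_iso E E' \<phi> (ball E r k) t (ball E r 1)"
    by (simp add: nbhd_def)
  moreover have "\<forall>w\<in>nbrs E r. deg E w = deg E' (\<phi> w)"
    using iso by simp
  moreover have "\<phi> ` nbrs E r = nbrs E' (\<phi> r)"
    using nbrs[of 0 r] assms(2) by simp
  ultimately have "drops E' z' t (\<phi> ` ball E r 1) (\<phi> r) = drops E z t (ball E r 1) r"
    by (intro drop_at_transport[OF inj marks]) auto
  moreover have "\<phi> ` ball E r 1 = insert r' (nbrs E' r')"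
    using nbrs[of 0 r] assms(2) r by (simp add: ball_1)
  ultimately show ?thesis
    unfolding root_drops_def G H using r by (simp add: ball_1)
qed

end

section \<open>Measurability on the space of rooted graphs\<close>

lemma Gstar_set_nbr_closed:
  assumes "(V, E, z, r) \<in> Gstar_set B"
  shows "nbr_closed B E z V" "r \<in> V"
  using assms unfolding Gstar_set_def wf_lf_def nbr_closed_def nbrs_def by auto

lemma ball_subset_closed:
  assumes "nbr_closed B E z V" "r \<in> V"
  shows "finite (ball E r k) \<and> ball E r k \<subseteq> V"
proof (induction k)
  case 0
  then show ?case using assms by auto
next
  case (Suc k)
  then show ?case using assms(1) by (auto simp: nbr_closed_def)
qed

text \<open>Finite codes of rooted graphs on \<open>{0..<m}\<close>: a countable family that contains a copy of
  every ball.\<close>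

definition decode :: "nat \<times> (nat \<times> nat) list \<times> nat list \<times> nat \<Rightarrow> rgraph" where
  "decode c = (case c of (m, es, zs, r) \<Rightarrow>
     ({0..<m}, \<lambda>u v. (u, v) \<in> set es, \<lambda>u. if u < length zs then zs ! u else 0, r))"

definition pullback :: "nat \<Rightarrow> (nat \<Rightarrow> nat) \<Rightarrow> rgraph \<Rightarrow> nat \<Rightarrow> rgraph" where
  "pullback m g G r' = (case G of (V, E, z, r) \<Rightarrow>
     ({0..<m}, \<lambda>u v. u < m \<and> v < m \<and> E (g u) (g v), \<lambda>u. if u < m then z (g u) else 0, r'))"

lemma pullback_in_range_decode: "pullback m g G r' \<in> range decode"
proof -
  obtain V E z r where G: "G = (V, E, z, r)" by (cases G)
  have "finite {(u, v). u < m \<and> v < m \<and> E (g u) (g v)}"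
    by (rule finite_subset[of _ "{0..<m} \<times> {0..<m}"]) auto
  then obtain es where "set es = {(u, v). u < m \<and> v < m \<and> E (g u) (g v)}"
    using finite_list by blast
  then have "pullback m g G r' = decode (m, es, map (\<lambda>u. z (g u)) [0..<m], r')"
    unfolding pullback_def decode_def G by (auto simp: fun_eq_iff)
  then show ?thesis by blast
qed

lemma pullback_in_Gstar_set:
  assumes "(V, E, z, r) \<in> Gstar_set B" "g ` {0..<m} \<subseteq> V" "r' < m"
  shows "pullback m g (V, E, z, r) r' \<in> Gstar_set B"
  using assms unfolding pullback_def Gstar_set_def wf_lf_def
  by (auto intro: finite_subset[of _ "{0..<m}"] simp: nbrs_def)

lemma ball_iso_pullback:
  assumes h: "bij_betw h (ball E r k) {0..<m}"
  shows "ball_iso k (V, E, z, r) (pullback m (inv_into (ball E r k) h) (V, E, z, r) (h r))"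
proof -
  define g where "g = inv_into (ball E r k) h"
  define E' where "E' u v = (u < m \<and> v < m \<and> E (g u) (g v))" for u v
  have gh: "g (h u) = u" and hm: "h u < m" if "u \<in> ball E r k" for u
    using h that unfolding g_def by (auto simp: bij_betw_def inv_into_f_f)
  have edges: "\<forall>u\<in>ball E r k. \<forall>v\<in>ball E r k. E u v \<longleftrightarrow> E' (h u) (h v)"
    using gh hm by (auto simp: E'_def)
  have "nbrs E' u' \<subseteq> {0..<m}" for u'
    by (auto simp: nbrs_def E'_def)
  then have "h ` ball E r k = ball E' (h r) k"
    using h image_ball[where E = E and E' = E' and r = r and k = k and \<phi> = h, OF edges]
    by (simp add: bij_betw_def)
  then show ?thesis
    unfolding pullback_def ball_iso_def prod.case g_def[symmetric] E'_def[symmetric]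
    using h edges gh by (intro exI[of _ h]) (auto simp: bij_betw_def hm)
qed

lemma ex_ball_iso_decode:
  assumes G: "G \<in> Gstar_set B"
  obtains C where "C \<in> range decode" "C \<in> Gstar_set B" "ball_iso k G C"
proof -
  obtain V E z r where GG: "G = (V, E, z, r)" by (cases G)
  have closed: "nbr_closed B E z V" and "r \<in> V"
    using Gstar_set_nbr_closed G GG by auto
  then have "finite (ball E r k)" "ball E r k \<subseteq> V"
    using ball_subset_closed by auto
  then obtain h where h: "bij_betw h (ball E r k) {0..<card (ball E r k)}"
    using ex_bij_betw_finite_nat by blast
  define C where "C = pullback (card (ball E r k)) (inv_into (ball E r k) h) G (h r)"
  have "C \<in> Gstar_set B"
    unfolding C_def GG using G GG bij_betw_inv_into[OF h] \<open>ball E r k \<subseteq> V\<close> h root_in_ball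
    by (intro pullback_in_Gstar_set) (auto simp: bij_betw_def)
  moreover have "ball_iso k G C"
    unfolding C_def GG by (rule ball_iso_pullback[OF h])
  ultimately show ?thesis
    using that pullback_in_range_decode C_def by blast
qed

lemma space_Gstar_space [simp]: "space (Gstar_space B) = Gstar_set B"
  unfolding Gstar_space_def by (rule space_measure_of_conv)

lemma ball_iso_cylinder_in_sets:
  assumes "C \<in> Gstar_set B"
  shows "{H \<in> Gstar_set B. ball_iso k C H} \<in> sets (Gstar_space B)"
proof -
  have gen: "{{H \<in> Gstar_set B. ball_iso k G H} | k G. G \<in> Gstar_set B} \<subseteq> Pow (Gstar_set B)"
    by auto
  show ?thesis
    unfolding Gstar_space_def sets_measure_of[OF gen] using assms by (intro sigma_sets.Basic) blast
qed

text \<open>A function that only depends on the \<open>k\<close>-ball is a countable union of cylinders on each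
  level set, using the countably many codes of balls.\<close>

lemma borel_measurable_ball_invariant:
  fixes g :: "rgraph \<Rightarrow> real"
  assumes inv: "\<And>G H. G \<in> Gstar_set B \<Longrightarrow> H \<in> Gstar_set B \<Longrightarrow> ball_iso k G H \<Longrightarrow> g H = g G"
  shows "g \<in> borel_measurable (Gstar_space B)"
proof (rule measurableI)
  fix A :: "real set"
  define I where "I = {C \<in> range decode. C \<in> Gstar_set B \<and> g C \<in> A}"
  have "countable I"
    unfolding I_def by (rule countable_subset[of _ "range decode"]) auto
  have "g -` A \<inter> space (Gstar_space B) = (\<Union>C\<in>I. {H \<in> Gstar_set B. ball_iso k C H})"
  proof
    show "g -` A \<inter> space (Gstar_space B) \<subseteq> (\<Union>C\<in>I. {H \<in> Gstar_set B. ball_iso k C H})"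
    proof
      fix G assume "G \<in> g -` A \<inter> space (Gstar_space B)"
      then have G: "G \<in> Gstar_set B" "g G \<in> A" by auto
      obtain C where C: "C \<in> range decode" "C \<in> Gstar_set B" "ball_iso k G C"
        using ex_ball_iso_decode[OF G(1)] by blast
      have "ball_iso k C G" using C(3) ball_iso_sym by (cases G, cases C) auto
      moreover have "C \<in> I"
        unfolding I_def using C G inv by auto
      ultimately show "G \<in> (\<Union>C\<in>I. {H \<in> Gstar_set B. ball_iso k C H})"
        using G(1) by blast
    qed
    show "(\<Union>C\<in>I. {H \<in> Gstar_set B. ball_iso k C H}) \<subseteq> g -` A \<inter> space (Gstar_space B)"
      using inv unfolding I_def by fastforce
  qed
  then show "g -` A \<inter> space (Gstar_space B) \<in> sets (Gstar_space B)"
    using \<open>countable I\<close> by (auto simp: I_def intro!: sets.countable_UN'' ball_iso_cylinder_in_sets)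
qed simp

section \<open>Discounted sums\<close>

lemma summable_discounted:
  fixes a :: "nat \<Rightarrow> real"
  assumes "0 \<le> \<gamma>" "\<gamma> < 1" "\<And>t. \<bar>a t\<bar> \<le> C"
  shows "summable (\<lambda>t. \<gamma> ^ t * a t)"
proof (rule summable_comparison_test)
  show "summable (\<lambda>t. C * \<gamma> ^ t)"
    using assms(1,2) by (intro summable_mult summable_geometric) auto
  show "\<exists>N. \<forall>t\<ge>N. norm (\<gamma> ^ t * a t) \<le> C * \<gamma> ^ t"
    using assms by (auto simp: abs_mult mult.commute intro!: mult_right_mono)
qed

lemma discounted_sum_bounds:
  fixes a :: "nat \<Rightarrow> real"
  assumes "0 \<le> \<gamma>" "\<gamma> < 1" "\<And>t. 0 \<le> a t \<and> a t \<le> C"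
  shows "0 \<le> (\<Sum>t. \<gamma> ^ t * a t) \<and> (\<Sum>t. \<gamma> ^ t * a t) \<le> C / (1 - \<gamma>)"
proof
  have s: "summable (\<lambda>t. \<gamma> ^ t * a t)"
    using assms by (intro summable_discounted[where C = C]) (auto simp: abs_le_iff)
  show "0 \<le> (\<Sum>t. \<gamma> ^ t * a t)"
    using assms by (intro suminf_nonneg s) auto
  have "(\<Sum>t. \<gamma> ^ t * a t) \<le> (\<Sum>t. C * \<gamma> ^ t)"
    using assms by (intro suminf_le s summable_mult summable_geometric)
      (auto simp: mult.commute intro!: mult_right_mono)
  also have "\<dots> = C / (1 - \<gamma>)"
    using assms by (simp add: suminf_mult suminf_geometric)
  finally show "(\<Sum>t. \<gamma> ^ t * a t) \<le> C / (1 - \<gamma>)" .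
qed

lemma discounted_sum_diff_le:
  fixes a b :: "nat \<Rightarrow> real"
  assumes "0 \<le> \<gamma>" "\<gamma> < 1" "\<And>t. 0 \<le> a t \<and> a t \<le> C" "\<And>t. 0 \<le> b t \<and> b t \<le> C"
    and agree: "\<And>t. t \<le> n \<Longrightarrow> a t = b t"
  shows "\<bar>(\<Sum>t. \<gamma> ^ t * a t) - (\<Sum>t. \<gamma> ^ t * b t)\<bar> \<le> C * \<gamma> ^ Suc n / (1 - \<gamma>)"
proof -
  define f where "f t = \<gamma> ^ t * (a t - b t)" for t
  have bound: "\<bar>a t - b t\<bar> \<le> C" for t
    using assms(3,4)[of t] by linarith
  have sa: "summable (\<lambda>t. \<gamma> ^ t * a t)" and sb: "summable (\<lambda>t. \<gamma> ^ t * b t)"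
    using assms by (auto intro!: summable_discounted[where C = C] simp: abs_le_iff)
  have sf: "summable f"
    unfolding f_def right_diff_distrib by (rule summable_diff[OF sa sb])
  have "(\<Sum>i<Suc n. f i) = 0"
    using agree by (intro sum.neutral) (auto simp: f_def less_Suc_eq_le)
  then have "(\<Sum>t. \<gamma> ^ t * a t) - (\<Sum>t. \<gamma> ^ t * b t) = (\<Sum>m. f (m + Suc n))"
    using suminf_diff[OF sa sb] suminf_split_initial_segment[OF sf, of "Suc n"]
    unfolding f_def right_diff_distrib by simp
  also have "\<dots> = (\<Sum>m. \<gamma> ^ Suc n * (\<gamma> ^ m * (a (m + Suc n) - b (m + Suc n))))"
    by (simp add: f_def power_add mult_ac)
  also have "\<dots> = \<gamma> ^ Suc n * (\<Sum>m. \<gamma> ^ m * (a (m + Suc n) - b (m + Suc n)))"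
    using bound assms(1,2) by (intro suminf_mult summable_discounted[where C = C])
  finally have diff: "\<bar>(\<Sum>t. \<gamma> ^ t * a t) - (\<Sum>t. \<gamma> ^ t * b t)\<bar>
      = \<gamma> ^ Suc n * \<bar>\<Sum>m. \<gamma> ^ m * (a (m + Suc n) - b (m + Suc n))\<bar>"
    using assms(1) by (simp add: abs_mult)
  have "summable (\<lambda>m. \<gamma> ^ m * \<bar>a (m + Suc n) - b (m + Suc n)\<bar>)"
    using bound assms(1,2) by (intro summable_discounted[where C = C]) auto
  then have "\<bar>\<Sum>m. \<gamma> ^ m * (a (m + Suc n) - b (m + Suc n))\<bar>
      \<le> (\<Sum>m. \<gamma> ^ m * \<bar>a (m + Suc n) - b (m + Suc n)\<bar>)"
    using summable_rabs[of "\<lambda>m. \<gamma> ^ m * (a (m + Suc n) - b (m + Suc n))"] assms(1)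
    by (simp add: abs_mult)
  also have "\<dots> \<le> C / (1 - \<gamma>)"
    using discounted_sum_bounds[OF assms(1,2), of "\<lambda>m. \<bar>a (m + Suc n) - b (m + Suc n)\<bar>"] bound
    by simp
  finally have "\<gamma> ^ Suc n * \<bar>\<Sum>m. \<gamma> ^ m * (a (m + Suc n) - b (m + Suc n))\<bar> \<le> \<gamma> ^ Suc n * (C / (1 - \<gamma>))"
    using assms(1) by (intro mult_left_mono) auto
  then show ?thesis
    unfolding diff by (metis mult.commute times_divide_eq_right)
qed

section \<open>Bounds on the expected drops and the objective at the root\<close>

locale queue_system = queue_model B \<alpha> dt rate lamP lam0 \<pi>
  for B :: nat and \<alpha> dt :: real and rate :: "'l::finite \<Rightarrow> real"
    and lamP :: "'l \<Rightarrow> 'l \<Rightarrow> real" and lam0 :: "'l \<Rightarrow> real" and \<pi> :: "nat \<Rightarrow> nat \<Rightarrow> real" +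
  fixes \<gamma> :: real
  assumes \<alpha>_nonneg: "0 \<le> \<alpha>" and dt_nonneg: "0 \<le> dt" and \<gamma>_nonneg: "0 \<le> \<gamma>" and \<gamma>_less_1: "\<gamma> < 1"
    and rate_nonneg: "\<And>l. 0 \<le> rate l"
    and lamP_nonneg: "\<And>l l'. 0 \<le> lamP l l'" and sum_lamP: "\<And>l. (\<Sum>l'\<in>UNIV. lamP l l') = 1"
    and lam0_nonneg: "\<And>l. 0 \<le> lam0 l" and sum_lam0: "(\<Sum>l\<in>UNIV. lam0 l) = 1"
    and policy_prob: "\<And>t s. s \<le> B \<Longrightarrow> 0 \<le> \<pi> t s \<and> \<pi> t s \<le> 1"
begin

definition rate_max :: real where
  "rate_max = Max (range rate)"

lemma rate_le_max: "rate l \<le> rate_max"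
  unfolding rate_max_def by (rule Max_ge) auto

lemma rate_max_nonneg: "0 \<le> rate_max"
  using rate_nonneg rate_le_max order_trans by blast

lemma law_nonneg: "0 \<le> state_law E z t S l x"
proof (induction t arbitrary: S l x)
  case 0
  then show ?case using lam0_nonneg by simp
next
  case (Suc t)
  have "a j \<le> 1" if "a \<in> acts (nbhd E S)" "j \<in> S" for a j
    using acts_le_1 subset_nbhd that by blast
  then have "0 \<le> kernel E t l0 (nbhd E S) S y x" if "x \<in> cfgs B S" "y \<in> cfgs B (nbhd E S)" for l0 y
    unfolding kernel_def using that
    by (intro sum_nonneg mult_nonneg_nonneg act_prob_nonneg prod_nonneg trans_prob_nonneg inflow_nonneg)
       (auto simp: rate_nonneg \<alpha>_nonneg dt_nonneg policy_prob cfgs_le)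
  then show ?case
    unfolding law_Suc using Suc.IH lamP_nonneg by (auto intro!: sum_nonneg)
qed

text \<open>The only configuration on \<open>{}\<close> is \<open>\<lambda>_. undefined\<close>; there the law is just the law of the
  arrival-rate chain.\<close>

lemma sum_law_empty: "(\<Sum>l\<in>UNIV. state_law E z t {} l (\<lambda>_. undefined)) = 1"
proof (induction t)
  case 0
  have "(\<lambda>_. undefined) = restrict z {}" by auto
  then show ?case using sum_lam0 by simp
next
  case (Suc t)
  have "(\<Sum>l'\<in>UNIV. state_law E z (Suc t) {} l' (\<lambda>_. undefined))
      = (\<Sum>l\<in>UNIV. state_law E z t {} l (\<lambda>_. undefined) * (\<Sum>l'\<in>UNIV. lamP l l'))"
    unfolding law_Suc sum_distrib_left
    by (simp add: cfgs_empty kernel_def acts_def act_prob_def) (rule sum.swap)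
  then show ?case using Suc sum_lamP by simp
qed

lemma sum_law:
  assumes "nbr_closed B E z W" "finite U" "U \<subseteq> W"
  shows "(\<Sum>l\<in>UNIV. \<Sum>x\<in>cfgs B U. state_law E z t U l x) = 1"
  using law_marginal[OF assms(1,2) empty_subsetI assms(3), of t _ "\<lambda>_. 1"] sum_law_empty
  by (simp add: cfgs_empty)

lemma cond_drops_bounds:
  assumes "finite S" "insert i (nbrs E i) \<subseteq> S" "x \<in> cfgs B S"
  shows "0 \<le> cond_drops E t l S i x \<and> cond_drops E t l S i x \<le> rate_max * (1 + real (deg E i)) * dt"
proof -
  let ?c = "rate_max * (1 + real (deg E i)) * dt"
  have ed: "0 \<le> exp_drops \<alpha> B dt (inflow (rate l) E a i) (x i) \<and>
      exp_drops \<alpha> B dt (inflow (rate l) E a i) (x i) \<le> ?c" if "a \<in> acts S" for a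
  proof -
    have a: "a j \<le> 1" if "j \<in> insert i (nbrs E i)" for j
      using acts_le_1 \<open>a \<in> acts S\<close> assms(2) that by blast
    have xi: "x i \<le> B" using cfgs_le[OF assms(3)] assms(2) by simp
    have "0 \<le> inflow (rate l) E a i" using a rate_nonneg by (intro inflow_nonneg) auto
    note drops = exp_drops_bounds[OF this \<alpha>_nonneg dt_nonneg xi]
    have "inflow (rate l) E a i \<le> rate l * (1 + real (deg E i))"
      using a rate_nonneg by (intro inflow_le) auto
    also have "\<dots> \<le> rate_max * (1 + real (deg E i))"
      using rate_le_max by (intro mult_right_mono) auto
    finally show ?thesis
      using drops dt_nonneg by (meson mult_right_mono order_trans)
  qed
  have ap: "0 \<le> act_prob \<pi> t x a S" for a
    using cfgs_le[OF assms(3)] policy_prob by (intro act_prob_nonneg) auto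
  have "cond_drops E t l S i x \<le> (\<Sum>a\<in>acts S. act_prob \<pi> t x a S * ?c)"
    unfolding cond_drops_def using ed ap by (intro sum_mono mult_left_mono) auto
  also have "\<dots> = ?c"
    using sum_act_prob[OF assms(1)] by (simp add: sum_distrib_right[symmetric])
  finally show ?thesis
    unfolding cond_drops_def using ed ap by (auto intro!: sum_nonneg)
qed

lemma drop_at_bounds:
  assumes "nbr_closed B E z W" "finite S" "S \<subseteq> W" "insert i (nbrs E i) \<subseteq> S"
  shows "0 \<le> drops E z t S i \<and> drops E z t S i \<le> rate_max * (1 + real (deg E i)) * dt"
proof -
  let ?c = "rate_max * (1 + real (deg E i)) * dt"
  have "drops E z t S i \<le> (\<Sum>l\<in>UNIV. \<Sum>x\<in>cfgs B S. state_law E z t S l x * ?c)"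
    unfolding drop_at_eq using cond_drops_bounds[OF assms(2,4)] law_nonneg
    by (intro sum_mono mult_left_mono) auto
  also have "\<dots> = ?c"
    using sum_law[OF assms(1-3)] by (simp add: sum_distrib_right[symmetric])
  finally show ?thesis
    unfolding drop_at_eq using cond_drops_bounds[OF assms(2,4)] law_nonneg
    by (auto intro!: sum_nonneg)
qed

abbreviation root_objective :: "rgraph \<Rightarrow> real" where
  "root_objective G \<equiv> J_root B \<alpha> dt \<gamma> rate lamP lam0 G \<pi>"

lemma root_objective_eq: "root_objective G = - (\<Sum>t. \<gamma> ^ t * root_drops t G)"
  by (cases G) (simp add: J_root_def root_drops_def)

lemma root_drops_bounds:
  assumes "G \<in> Gstar_set B"
  shows "0 \<le> root_drops t G \<and> root_drops t G \<le> rate_max * (1 + real (root_deg G)) * dt"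
proof -
  obtain V E z r where G: "G = (V, E, z, r)" by (cases G)
  have closed: "nbr_closed B E z V" and "r \<in> V"
    using Gstar_set_nbr_closed assms G by auto
  then have "finite (insert r (nbrs E r))" "insert r (nbrs E r) \<subseteq> V"
    by (auto simp: nbr_closed_def)
  from drop_at_bounds[OF closed this order_refl] show ?thesis
    unfolding G root_drops_def root_deg_def by simp
qed

lemma root_objective_bounds:
  assumes "G \<in> Gstar_set B"
  shows "- (rate_max * (1 + real (root_deg G)) * dt / (1 - \<gamma>)) \<le> root_objective G \<and> root_objective G \<le> 0"
  using discounted_sum_bounds[OF \<gamma>_nonneg \<gamma>_less_1, of "\<lambda>t. root_drops t G"] root_drops_bounds[OF assms]
  unfolding root_objective_eq by auto

text \<open>The first \<open>n + 1\<close> epochs are determined by the \<open>(n + 2)\<close>-ball, and the rest of the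
  discounted sum is at most \<open>C \<gamma>\<^sup>n\<^sup>+\<^sup>1 / (1 - \<gamma>)\<close>.\<close>

lemma root_objective_ball_iso_close:
  assumes G: "G \<in> Gstar_set B" and "0 < \<epsilon>"
  shows "\<exists>k. \<forall>H\<in>Gstar_set B. ball_iso k G H \<longrightarrow> \<bar>root_objective H - root_objective G\<bar> < \<epsilon>"
proof -
  define C where "C = rate_max * (1 + real (root_deg G)) * dt"
  have "(\<lambda>n. C * \<gamma> ^ Suc n / (1 - \<gamma>)) \<longlonglongrightarrow> C * 0 / (1 - \<gamma>)"
    using \<gamma>_nonneg \<gamma>_less_1
    by (intro tendsto_intros LIMSEQ_power_zero[THEN LIMSEQ_Suc]) auto
  then obtain n where n: "C * \<gamma> ^ Suc n / (1 - \<gamma>) < \<epsilon>"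
    using \<open>0 < \<epsilon>\<close> by (metis (no_types, lifting) eventually_sequentially order.refl order_tendstoD(2)
        mult_zero_right div_0)
  show ?thesis
  proof (intro exI[of _ "n + 2"] ballI impI)
    fix H assume H: "H \<in> Gstar_set B" and iso: "ball_iso (n + 2) G H"
    have "root_deg H = root_deg G" using root_deg_ball_iso[OF iso] by simp
    then have "\<bar>(\<Sum>t. \<gamma> ^ t * root_drops t H) - (\<Sum>t. \<gamma> ^ t * root_drops t G)\<bar> \<le> C * \<gamma> ^ Suc n / (1 - \<gamma>)"
      using root_drops_bounds[OF G] root_drops_bounds[OF H] root_drops_ball_iso[OF iso]
      unfolding C_def by (intro discounted_sum_diff_le \<gamma>_nonneg \<gamma>_less_1) auto
    then show "\<bar>root_objective H - root_objective G\<bar> < \<epsilon>"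
      unfolding root_objective_eq using n by linarith
  qed
qed

lemma borel_measurable_root_objective: "root_objective \<in> borel_measurable (Gstar_space B)"
proof (rule borel_measurable_LIMSEQ_real[where u = "\<lambda>n G. - (\<Sum>t<n. \<gamma> ^ t * root_drops t G)"])
  fix G assume "G \<in> space (Gstar_space B)"
  then have "summable (\<lambda>t. \<gamma> ^ t * root_drops t G)"
    using root_drops_bounds \<gamma>_nonneg \<gamma>_less_1
    by (intro summable_discounted[where C = "rate_max * (1 + real (root_deg G)) * dt"]) auto
  then show "(\<lambda>n. - (\<Sum>t<n. \<gamma> ^ t * root_drops t G)) \<longlonglongrightarrow> root_objective G"
    unfolding root_objective_eq by (intro tendsto_minus summable_LIMSEQ)
next
  have "root_drops t \<in> borel_measurable (Gstar_space B)" for t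
    by (rule borel_measurable_ball_invariant[where k = "t + 2"]) (auto intro: root_drops_ball_iso)
  then show "(\<lambda>G. - (\<Sum>t<n. \<gamma> ^ t * root_drops t G)) \<in> borel_measurable (Gstar_space B)" for n
    by measurable
qed

end

section \<open>The objective of a finite graph as an average over rooted components\<close>

lemma sys_graph_nbr_closed:
  assumes "sys_graph d B (V, E, z)"
  shows "nbr_closed B E z V" "finite V" "\<forall>i\<in>V. deg E i \<le> d"
  using assms unfolding sys_graph_def wf_lf_def nbr_closed_def nbrs_def by auto

definition comp_edges :: "(nat \<Rightarrow> nat \<Rightarrow> bool) \<Rightarrow> nat \<Rightarrow> nat \<Rightarrow> nat \<Rightarrow> bool" where
  "comp_edges E i u v = (E u v \<and> E\<^sup>*\<^sup>* i u \<and> E\<^sup>*\<^sup>* i v)"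

lemma component_eq: "component (V, E, z) i = ({j. E\<^sup>*\<^sup>* i j}, comp_edges E i, z, i)"
  by (simp add: component_def comp_edges_def Let_def fun_eq_iff)

lemma reachable_nbrs: "E\<^sup>*\<^sup>* i u \<Longrightarrow> w \<in> nbrs E u \<Longrightarrow> E\<^sup>*\<^sup>* i w"
  by (auto simp: nbrs_def intro: rtranclp.rtrancl_into_rtrancl)

lemma nbrs_comp_edges: "E\<^sup>*\<^sup>* i u \<Longrightarrow> nbrs (comp_edges E i) u = nbrs E u"
  unfolding nbrs_def comp_edges_def by (auto intro: rtranclp.rtrancl_into_rtrancl)

lemma deg_comp_edges: "E\<^sup>*\<^sup>* i u \<Longrightarrow> deg (comp_edges E i) u = deg E u"
  unfolding deg_def by (simp add: nbrs_comp_edges)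

lemma nbhd_iso_component:
  "S \<subseteq> {j. E\<^sup>*\<^sup>* i j} \<Longrightarrow> nbhd_iso E (comp_edges E i) id {j. E\<^sup>*\<^sup>* i j} t S"
proof (induction t arbitrary: S)
  case 0
  then show ?case by simp
next
  case (Suc t)
  have "nbhd E S \<subseteq> {j. E\<^sup>*\<^sup>* i j}"
    using Suc.prems reachable_nbrs by (fastforce simp: nbhd_def)
  then show ?case
    using Suc reachable_nbrs by (auto simp: nbrs_comp_edges deg_comp_edges)
qed

lemma component_in_Gstar_set:
  assumes "sys_graph d B (V, E, z)" "i \<in> V"
  shows "component (V, E, z) i \<in> Gstar_set B"
proof -
  have wf: "wf_lf B (V, E, z)" using assms(1) by (simp add: sys_graph_def)
  have "j \<in> V" if "E\<^sup>*\<^sup>* i j" for j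
    using that assms(2) wf by (induction rule: rtranclp_induct) (auto simp: wf_lf_def)
  then show ?thesis
    using wf unfolding component_eq Gstar_set_def wf_lf_def
    by (auto simp: comp_edges_def nbrs_comp_edges)
qed

lemma root_deg_component:
  assumes "sys_graph d B (V, E, z)" "i \<in> V"
  shows "root_deg (component (V, E, z) i) \<le> d"
  using sys_graph_nbr_closed(3)[OF assms(1)] assms(2)
  by (simp add: component_eq root_deg_def deg_comp_edges)

context queue_system
begin

abbreviation graph_objective :: "mgraph \<Rightarrow> real" where
  "graph_objective G \<equiv> J_graph B \<alpha> dt \<gamma> rate lamP lam0 G \<pi>"

lemma root_drops_component:
  assumes "sys_graph d B (V, E, z)" "i \<in> V"
  shows "root_drops t (component (V, E, z) i) = drops E z t V i"
proof -
  have closed: "nbr_closed B E z V" and "finite V"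
    using sys_graph_nbr_closed[OF assms(1)] by auto
  have ii: "E\<^sup>*\<^sup>* i i" by simp
  have reach: "insert i (nbrs E i) \<subseteq> {j. E\<^sup>*\<^sup>* i j}"
    using reachable_nbrs[OF ii] by auto
  have "root_drops t (component (V, E, z) i) = drops (comp_edges E i) z t (id ` insert i (nbrs E i)) (id i)"
    by (simp add: root_drops_def component_eq nbrs_comp_edges)
  also have "\<dots> = drops E z t (insert i (nbrs E i)) i"
    using nbhd_iso_component[OF reach] reach
    by (intro drop_at_transport) (auto simp: nbrs_comp_edges deg_comp_edges reachable_nbrs)
  also have "\<dots> = drops E z t V i"
    using closed assms(2) \<open>finite V\<close>
    by (intro drop_at_marginal[symmetric]) (auto simp: nbr_closed_def)
  finally show ?thesis .
qed

definition objective_floor :: "nat \<Rightarrow> real" where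
  "objective_floor d = - (rate_max * (1 + real d) * dt / (1 - \<gamma>))"

text \<open>The objective at the root is unbounded below on \<open>G\<^sub>*\<close> (the degree is not bounded there),
  so local weak convergence is applied to the objective truncated at the bound that holds for
  degree at most \<open>d\<close>.\<close>

definition clipped_objective :: "nat \<Rightarrow> rgraph \<Rightarrow> real" where
  "clipped_objective d G = max (objective_floor d) (root_objective G)"

lemma root_objective_ge_floor:
  assumes "G \<in> Gstar_set B" "root_deg G \<le> d"
  shows "objective_floor d \<le> root_objective G"
proof -
  have "rate_max * (1 + real (root_deg G)) * dt / (1 - \<gamma>) \<le> rate_max * (1 + real d) * dt / (1 - \<gamma>)"
    using assms(2) rate_max_nonneg dt_nonneg \<gamma>_less_1
    by (intro divide_right_mono mult_right_mono mult_left_mono) auto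
  then show ?thesis
    using root_objective_bounds[OF assms(1)] unfolding objective_floor_def by linarith
qed

lemma abs_clipped_objective_le:
  "G \<in> Gstar_set B \<Longrightarrow> \<bar>clipped_objective d G\<bar> \<le> - objective_floor d"
  using root_objective_bounds[of G] rate_max_nonneg dt_nonneg \<gamma>_less_1
  unfolding clipped_objective_def objective_floor_def by (auto simp: abs_le_iff)

lemma lw_continuous_clipped_objective: "lw_continuous B (clipped_objective d)"
  unfolding lw_continuous_def
proof (intro ballI allI impI)
  fix G :: rgraph and \<epsilon> :: real assume "G \<in> Gstar_set B" "0 < \<epsilon>"
  then obtain k where "\<forall>H\<in>Gstar_set B. ball_iso k G H \<longrightarrow> \<bar>root_objective H - root_objective G\<bar> < \<epsilon>"
    using root_objective_ball_iso_close by blast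
  then show "\<exists>k. \<forall>H\<in>Gstar_set B. ball_iso k G H \<longrightarrow> \<bar>clipped_objective d H - clipped_objective d G\<bar> < \<epsilon>"
    unfolding clipped_objective_def by (intro exI[of _ k]) auto
qed

lemma graph_objective_eq_lw_avg:
  assumes "sys_graph d B G"
  shows "graph_objective G = lw_avg (clipped_objective d) G"
proof -
  obtain V E z where G: "G = (V, E, z)" by (cases G)
  let ?D = "\<lambda>i t. \<gamma> ^ t * drops E z t V i"
  have closed: "nbr_closed B E z V" and "finite V"
    using sys_graph_nbr_closed assms G by auto
  have summable: "summable (?D i)" if "i \<in> V" for i
    using drop_at_bounds[OF closed \<open>finite V\<close> order_refl] closed that \<gamma>_nonneg \<gamma>_less_1
    by (intro summable_discounted[where C = "rate_max * (1 + real (deg E i)) * dt"])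
       (auto simp: nbr_closed_def)
  have "clipped_objective d (component (V, E, z) i) = - (\<Sum>t. ?D i t)" if "i \<in> V" for i
  proof -
    note sys = assms[unfolded G]
    have "objective_floor d \<le> root_objective (component (V, E, z) i)"
      using component_in_Gstar_set[OF sys that] root_deg_component[OF sys that]
      by (rule root_objective_ge_floor)
    then show ?thesis
      unfolding clipped_objective_def root_objective_eq root_drops_component[OF sys that] by simp
  qed
  then have "lw_avg (clipped_objective d) G = - (\<Sum>i\<in>V. \<Sum>t. ?D i t) / real (card V)"
    unfolding lw_avg_def G by (simp add: sum_negf)
  also have "\<dots> = - (\<Sum>t. (\<Sum>i\<in>V. ?D i t) / real (card V))"
    using summable by (simp add: suminf_sum suminf_divide summable_sum)
  also have "\<dots> = graph_objective G"
    unfolding J_graph_def G by (simp add: sum_distrib_left)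
  finally show ?thesis ..
qed

end

section \<open>Convergence of the objectives\<close>

lemma abs_expectation_diff_le:
  fixes X :: "'a \<Rightarrow> real"
  assumes bounded: "\<And>x. x \<in> set_pmf Q \<Longrightarrow> \<bar>X x\<bar> \<le> K" and "0 \<le> \<epsilon>"
  shows "\<bar>measure_pmf.expectation Q X - c\<bar> \<le> \<epsilon> + (K + \<bar>c\<bar>) * measure_pmf.prob Q {x. \<epsilon> < \<bar>X x - c\<bar>}"
proof -
  let ?A = "{x. \<epsilon> < \<bar>X x - c\<bar>}"
  have AE_bounded: "AE x in measure_pmf Q. \<bar>X x\<bar> \<le> K"
    using bounded by (rule AE_pmfI)
  have int_X: "integrable (measure_pmf Q) X"
    using AE_bounded by (intro measure_pmf.integrable_const_bound) auto
  have int_ind: "integrable (measure_pmf Q) (\<lambda>x. (K + \<bar>c\<bar>) * indicator ?A x)"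
    by (intro measure_pmf.integrable_const_bound[where B = "\<bar>K + \<bar>c\<bar>\<bar>"]) (auto simp: indicator_def)
  have "\<bar>measure_pmf.expectation Q X - c\<bar> = \<bar>measure_pmf.expectation Q (\<lambda>x. X x - c)\<bar>"
    using int_X by (simp add: measure_pmf.prob_space)
  also have "\<dots> \<le> measure_pmf.expectation Q (\<lambda>x. \<bar>X x - c\<bar>)"
    using integral_norm_bound[of "measure_pmf Q" "\<lambda>x. X x - c"] by simp
  also have "\<dots> \<le> measure_pmf.expectation Q (\<lambda>x. \<epsilon> + (K + \<bar>c\<bar>) * indicator ?A x)"
  proof (rule integral_mono_AE)
    show "integrable (measure_pmf Q) (\<lambda>x. \<bar>X x - c\<bar>)"
      using AE_bounded by (intro measure_pmf.integrable_const_bound[where B = "K + \<bar>c\<bar>"])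
        (auto elim!: eventually_mono)
    show "integrable (measure_pmf Q) (\<lambda>x. \<epsilon> + (K + \<bar>c\<bar>) * indicator ?A x)"
      using int_ind by simp
    show "AE x in measure_pmf Q. \<bar>X x - c\<bar> \<le> \<epsilon> + (K + \<bar>c\<bar>) * indicator ?A x"
      using AE_bounded
    proof eventually_elim
      case (elim x)
      then have "\<bar>X x - c\<bar> \<le> K + \<bar>c\<bar>"
        using abs_triangle_ineq4[of "X x" c] by linarith
      then show ?case
        using assms(2) by (auto simp: indicator_def)
    qed
  qed
  also have "\<dots> = \<epsilon> + (K + \<bar>c\<bar>) * measure_pmf.prob Q ?A"
    using int_ind by (simp add: measure_pmf.prob_space)
  finally show ?thesis .
qed

lemma expectation_tendsto_if_prob_tendsto:
  fixes X :: "'a \<Rightarrow> real" and Q :: "nat \<Rightarrow> 'a pmf"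
  assumes bounded: "\<And>n x. x \<in> set_pmf (Q n) \<Longrightarrow> \<bar>X x\<bar> \<le> K"
    and prob: "\<And>\<epsilon>. 0 < \<epsilon> \<Longrightarrow> (\<lambda>n. measure_pmf.prob (Q n) {x. \<epsilon> < \<bar>X x - c\<bar>}) \<longlonglongrightarrow> 0"
  shows "(\<lambda>n. measure_pmf.expectation (Q n) X) \<longlonglongrightarrow> c"
proof (rule tendstoI)
  fix e :: real assume "0 < e"
  define L where "L = \<bar>K\<bar> + \<bar>c\<bar> + 1"
  have "0 < L" unfolding L_def by simp
  have "eventually (\<lambda>n. measure_pmf.prob (Q n) {x. e / 2 < \<bar>X x - c\<bar>} < e / (2 * L)) sequentially"
    using \<open>0 < e\<close> \<open>0 < L\<close> by (intro order_tendstoD(2)[OF prob]) auto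
  then show "eventually (\<lambda>n. dist (measure_pmf.expectation (Q n) X) c < e) sequentially"
  proof eventually_elim
    case (elim n)
    have "\<bar>measure_pmf.expectation (Q n) X - c\<bar>
        \<le> e / 2 + (K + \<bar>c\<bar>) * measure_pmf.prob (Q n) {x. e / 2 < \<bar>X x - c\<bar>}"
      using \<open>0 < e\<close> by (intro abs_expectation_diff_le bounded) auto
    also have "\<dots> \<le> e / 2 + L * measure_pmf.prob (Q n) {x. e / 2 < \<bar>X x - c\<bar>}"
      by (intro add_left_mono mult_right_mono) (auto simp: L_def)
    also have "\<dots> < e / 2 + L * (e / (2 * L))"
      using mult_strict_left_mono[OF elim \<open>0 < L\<close>] by linarith
    also have "\<dots> = e"
      using \<open>0 < L\<close> by simp
    finally show ?case by (simp add: dist_real_def)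
  qed
qed

lemma abs_lw_avg_le:
  assumes "sys_graph d B G" "\<And>H. H \<in> Gstar_set B \<Longrightarrow> \<bar>f H\<bar> \<le> K"
  shows "\<bar>lw_avg f G\<bar> \<le> K"
proof -
  obtain V E z where G: "G = (V, E, z)" by (cases G)
  have "finite V" "V \<noteq> {}" using assms(1) G by (auto simp: sys_graph_def)
  have "\<bar>\<Sum>i\<in>V. f (component G i)\<bar> \<le> (\<Sum>i\<in>V. K)"
    using assms component_in_Gstar_set[of d B V E z] G
    by (intro order_trans[OF sum_abs sum_mono]) auto
  then show ?thesis
    using \<open>finite V\<close> \<open>V \<noteq> {}\<close> unfolding lw_avg_def G
    by (simp add: abs_divide divide_le_eq card_gt_0_iff mult.commute)
qed

lemma lwc_prob_expectation_tendsto: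
  assumes "lwc_prob B P M" "\<forall>n. \<forall>G\<in>set_pmf (P n). sys_graph d B G"
    and "lw_continuous B f" "\<And>G. G \<in> Gstar_set B \<Longrightarrow> \<bar>f G\<bar> \<le> K"
  shows "(\<lambda>n. measure_pmf.expectation (P n) (lw_avg f)) \<longlonglongrightarrow> integral\<^sup>L M f"
proof (rule expectation_tendsto_if_prob_tendsto)
  show "\<bar>lw_avg f G\<bar> \<le> K" if "G \<in> set_pmf (P n)" for n G
    using assms(2,4) that by (intro abs_lw_avg_le) auto
  have "lw_bounded B f"
    unfolding lw_bounded_def using assms(4) by blast
  then show "(\<lambda>n. measure_pmf.prob (P n) {G. \<epsilon> < \<bar>lw_avg f G - integral\<^sup>L M f\<bar>}) \<longlonglongrightarrow> 0"
    if "0 < \<epsilon>" for \<epsilon>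
    using assms(1,3) that unfolding lwc_prob_def by blast
qed

text \<open>The limit inherits the degree bound: the indicator of a root degree above \<open>d\<close> averages
  to zero on every finite graph, hence integrates to zero in the limit.\<close>

lemma AE_root_deg_le:
  assumes lwc: "lwc_prob B P M" and sys: "\<forall>n. \<forall>G\<in>set_pmf (P n). sys_graph d B G"
    and "prob_space M" "sets M = sets (Gstar_space B)"
  shows "AE G in M. root_deg G \<le> d"
proof -
  interpret M: prob_space M by fact
  define g where "g G = (if root_deg G \<le> d then 0 else 1 :: real)" for G
  have ball_inv: "g H = g G" if "ball_iso 1 G H" for G H
    unfolding g_def using root_deg_ball_iso[OF that] by simp
  have "lw_continuous B g"
    unfolding lw_continuous_def using ball_inv by (intro ballI allI impI exI[of _ 1]) simp
  then have "(\<lambda>n. measure_pmf.expectation (P n) (lw_avg g)) \<longlonglongrightarrow> integral\<^sup>L M g"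
    by (rule lwc_prob_expectation_tendsto[OF lwc sys, where K = 1]) (simp add: g_def)
  moreover have "measure_pmf.expectation (P n) (lw_avg g) = 0" for n
  proof -
    have "lw_avg g G = 0" if "sys_graph d B G" for G
    proof -
      obtain V E z where G: "G = (V, E, z)" by (cases G)
      have "g (component G i) = 0" if "i \<in> V" for i
        using root_deg_component[OF \<open>sys_graph d B G\<close>[unfolded G] that] unfolding g_def G by simp
      then show ?thesis unfolding lw_avg_def G by simp
    qed
    then have "measure_pmf.expectation (P n) (lw_avg g) = measure_pmf.expectation (P n) (\<lambda>_. 0)"
      using sys by (intro integral_cong_AE) (auto intro!: AE_pmfI)
    then show ?thesis by simp
  qed
  ultimately have "integral\<^sup>L M g = 0"
    by (simp add: LIMSEQ_const_iff)
  moreover have "g \<in> borel_measurable M"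
    unfolding measurable_cong_sets[OF assms(4) refl]
    by (rule borel_measurable_ball_invariant[where k = 1]) (simp add: ball_inv)
  moreover have "integrable M g"
    using \<open>g \<in> borel_measurable M\<close> by (intro M.integrable_const_bound[where B = 1]) (auto simp: g_def)
  ultimately have "AE G in M. g G = 0"
    using integral_nonneg_eq_0_iff_AE[of M g] by (simp add: g_def)
  then show ?thesis
    by eventually_elim (simp add: g_def split: if_splits)
qed

context queue_system
begin

lemma J_fin_tendsto_J_lim:
  assumes lwc: "lwc_prob B P M" and sys: "\<forall>n. \<forall>G\<in>set_pmf (P n). sys_graph d B G"
    and "prob_space M" and sets_M: "sets M = sets (Gstar_space B)"
  shows "(\<lambda>n. J_fin B \<alpha> dt \<gamma> rate lamP lam0 (P n) \<pi>) \<longlonglongrightarrow> J_lim B \<alpha> dt \<gamma> rate lamP lam0 M \<pi>"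
proof -
  have "J_fin B \<alpha> dt \<gamma> rate lamP lam0 (P n) \<pi>
      = measure_pmf.expectation (P n) (lw_avg (clipped_objective d))" for n
    unfolding J_fin_def using sys
    by (intro integral_cong_AE) (auto intro!: AE_pmfI graph_objective_eq_lw_avg)
  moreover have "(\<lambda>n. measure_pmf.expectation (P n) (lw_avg (clipped_objective d)))
      \<longlonglongrightarrow> integral\<^sup>L M (clipped_objective d)"
    by (rule lwc_prob_expectation_tendsto[OF lwc sys lw_continuous_clipped_objective
          abs_clipped_objective_le])
  moreover have "integral\<^sup>L M (clipped_objective d) = J_lim B \<alpha> dt \<gamma> rate lamP lam0 M \<pi>"
  proof -
    have meas: "root_objective \<in> borel_measurable M"
      unfolding measurable_cong_sets[OF sets_M refl] by (rule borel_measurable_root_objective)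
    have "space M = Gstar_set B"
      using sets_eq_imp_space_eq[OF sets_M] by simp
    have "AE G in M. clipped_objective d G = root_objective G"
      using AE_space AE_root_deg_le[OF lwc sys \<open>prob_space M\<close> sets_M]
    proof eventually_elim
      case (elim G)
      then show ?case
        using root_objective_ge_floor[of G d] \<open>space M = Gstar_set B\<close>
        by (simp add: clipped_objective_def)
    qed
    moreover have "clipped_objective d \<in> borel_measurable M"
      unfolding clipped_objective_def using meas by measurable
    ultimately show ?thesis
      unfolding J_lim_def using meas by (intro integral_cong_AE)
  qed
  ultimately show ?thesis by simp
qed

end

lemma eventually_argmax_of_tendsto:
  fixes f :: "nat \<Rightarrow> 'i \<Rightarrow> real"
  assumes "finite A" "i \<in> A" "inj_on L A" "\<And>j. j \<in> A \<Longrightarrow> L j \<le> L i"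
    and lim: "\<And>j. j \<in> A \<Longrightarrow> (\<lambda>n. f n j) \<longlonglongrightarrow> L j"
  shows "\<exists>n'. \<forall>n>n'. \<forall>j\<in>A. f n j \<le> f n i"
proof -
  have "eventually (\<lambda>n. f n j < f n i) sequentially" if "j \<in> A - {i}" for j
  proof -
    have "L j < L i"
      using assms(2-4) that by (metis DiffE inj_on_eq_iff insertI1 order_less_le)
    moreover have "(\<lambda>n. f n i - f n j) \<longlonglongrightarrow> L i - L j"
      using that assms(2) by (intro tendsto_diff lim) auto
    ultimately show ?thesis
      using order_tendstoD(1)[of "\<lambda>n. f n i - f n j" "L i - L j" sequentially 0] by simp
  qed
  then have "eventually (\<lambda>n. \<forall>j\<in>A - {i}. f n j < f n i) sequentially"
    using assms(1) by (intro eventually_ball_finite) auto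
  then obtain N where "\<forall>n\<ge>N. \<forall>j\<in>A - {i}. f n j < f n i"
    unfolding eventually_sequentially by blast
  then have "\<forall>n>N. \<forall>j\<in>A. f n j \<le> f n i"
    by (metis DiffI empty_iff insert_iff less_imp_le order_refl order_less_imp_le)
  then show ?thesis by blast
qed

theorem corollary2p2:
  fixes d B :: nat and \<alpha> dt \<gamma> :: real
    and rate :: "'l::finite \<Rightarrow> real" and lamP :: "'l \<Rightarrow> 'l \<Rightarrow> real" and lam0 :: "'l \<Rightarrow> real"
    and P :: "nat \<Rightarrow> mgraph pmf" and M :: "rgraph measure"
    and K :: nat and pol :: "nat \<Rightarrow> nat \<Rightarrow> nat \<Rightarrow> real" and i :: nat
  assumes "\<alpha> > 0" and "dt > 0" and "0 < \<gamma>" and "\<gamma> < 1"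
    and "\<forall>l. rate l > 0"
    and "\<forall>l l'. lamP l l' \<ge> 0" and "\<forall>l. (\<Sum>l'\<in>UNIV. lamP l l') = 1"
    and "\<forall>l. lam0 l \<ge> 0" and "(\<Sum>l\<in>UNIV. lam0 l) = 1"
    and "\<forall>n. \<forall>G\<in>set_pmf (P n). sys_graph d B G"
    and "prob_space M" and "sets M = sets (Gstar_space B)"
    and "lwc_prob B P M"
    and "\<forall>k<K. \<forall>t s. s \<le> B \<longrightarrow> 0 \<le> pol k t s \<and> pol k t s \<le> 1"
    and "inj_on (\<lambda>j. J_lim B \<alpha> dt \<gamma> rate lamP lam0 M (pol j)) {..<K}"
    and "i < K"
    and "\<forall>j<K. J_lim B \<alpha> dt \<gamma> rate lamP lam0 M (pol j) \<le> J_lim B \<alpha> dt \<gamma> rate lamP lam0 M (pol i)"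
  shows "\<exists>n'. \<forall>n>n'. \<forall>j<K.
           J_fin B \<alpha> dt \<gamma> rate lamP lam0 (P n) (pol j) \<le> J_fin B \<alpha> dt \<gamma> rate lamP lam0 (P n) (pol i)"
proof -
  have "(\<lambda>n. J_fin B \<alpha> dt \<gamma> rate lamP lam0 (P n) (pol j)) \<longlonglongrightarrow> J_lim B \<alpha> dt \<gamma> rate lamP lam0 M (pol j)"
    if "j < K" for j
  proof -
    interpret queue_system B \<alpha> dt rate lamP lam0 "pol j" \<gamma>
      using assms(1-9,14) that by unfold_locales (auto intro: less_imp_le)
    show ?thesis
      by (rule J_fin_tendsto_J_lim[OF assms(13,10,11,12)])
  qed
  then obtain n' where "\<forall>n>n'. \<forall>j\<in>{..<K}.
      J_fin B \<alpha> dt \<gamma> rate lamP lam0 (P n) (pol j) \<le> J_fin B \<alpha> dt \<gamma> rate lamP lam0 (P n) (pol i)"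
    using assms(15-17)
      eventually_argmax_of_tendsto[where A = "{..<K}" and i = i
        and L = "\<lambda>j. J_lim B \<alpha> dt \<gamma> rate lamP lam0 M (pol j)"
        and f = "\<lambda>n j. J_fin B \<alpha> dt \<gamma> rate lamP lam0 (P n) (pol j)"]
    by auto
  then show ?thesis by auto
qed

end
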